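(* Let $\mathbb{K}$ be an algebraically closed field of characteristic $p$, with $p=0$ or $p\ge5$. Let $(\Gamma_1,\Gamma_2,\Gamma_3)$ and $(\Delta_1,\Delta_2,\Delta_3)$ be two dual $3$-nets of conic-line type of order $n$ in $PG(2,\mathbb{K})$ (with $n<p$ if $p>0$), where $\Gamma_1\cup\Gamma_2$ and $\Delta_1\cup\Delta_2$ lie on irreducible conics, $\Gamma_3$ lies on a line $\ell$ and $\Delta_3$ lies on a line $s$. If $n\ge5$ and $\Gamma_1=\Delta_1$, then $\ell=s$.
   Context: A dual $3$-net of order $n$ in $PG(2,\mathbb{K})$ is a triple of pairwise disjoint point sets, each of size $n$, such that every line meeting two distinct components meets each component in exactly one point. A dual $3$-net of order $n\ge4$ is of conic-line type if two of its components lie on an irreducible conic and the third lies on a line. *)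

theory Defs
  imports Main "HOL-Computational_Algebra.Polynomial"
begin

definition alg_closed :: "'k::field itself \<Rightarrow> bool" where
  "alg_closed _ \<longleftrightarrow> (\<forall>q :: 'k poly. degree q > 0 \<longrightarrow> (\<exists>x. poly q x = 0))"

text \<open>Homogeneous coordinates are triples; a point of PG(2,K) is the set of
  nonzero scalar multiples of a nonzero triple.\<close>
type_synonym 'k vec3 = "'k \<times> 'k \<times> 'k"
type_synonym 'k ppoint = "'k vec3 set"

definition pt_of :: "'k::field vec3 \<Rightarrow> 'k ppoint" where
  "pt_of v = (case v of (x, y, z) \<Rightarrow> {(c * x, c * y, c * z) | c. c \<noteq> 0})"

definition proj_points :: "'k::field ppoint set" where
  "proj_points = {pt_of v | v. v \<noteq> (0, 0, 0)}"

definition lin :: "'k::field vec3 \<Rightarrow> 'k vec3 \<Rightarrow> 'k" where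
  "lin u v = (case u of (a, b, c) \<Rightarrow> case v of (x, y, z) \<Rightarrow> a * x + b * y + c * z)"

definition proj_line :: "'k::field vec3 \<Rightarrow> 'k ppoint set" where
  "proj_line u = {pt_of v | v. v \<noteq> (0, 0, 0) \<and> lin u v = 0}"

definition is_line :: "'k::field ppoint set \<Rightarrow> bool" where
  "is_line L \<longleftrightarrow> (\<exists>u. u \<noteq> (0, 0, 0) \<and> L = proj_line u)"

definition quad :: "'k::field vec3 \<Rightarrow> 'k vec3 \<Rightarrow> 'k vec3 \<Rightarrow> 'k" where
  "quad A B v = (case A of (a, b, c) \<Rightarrow> case B of (d, e, f) \<Rightarrow> case v of (x, y, z) \<Rightarrow>
      a * x^2 + b * y^2 + c * z^2 + d * x * y + e * x * z + f * y * z)"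

text \<open>Irreducible quadratic form: it is not a product of two linear forms
  (this also excludes the zero form, which is 0 * 0).\<close>
definition irreducible_qf :: "'k::field vec3 \<Rightarrow> 'k vec3 \<Rightarrow> bool" where
  "irreducible_qf A B \<longleftrightarrow> \<not> (\<exists>u w. \<forall>v. quad A B v = lin u v * lin w v)"

definition conic_pts :: "'k::field vec3 \<Rightarrow> 'k vec3 \<Rightarrow> 'k ppoint set" where
  "conic_pts A B = {pt_of v | v. v \<noteq> (0, 0, 0) \<and> quad A B v = 0}"

definition is_irred_conic :: "'k::field ppoint set \<Rightarrow> bool" where
  "is_irred_conic C \<longleftrightarrow> (\<exists>A B. irreducible_qf A B \<and> C = conic_pts A B)"

definition dual_3net :: "'k::field ppoint set \<Rightarrow> 'k ppoint set \<Rightarrow> 'k ppoint set \<Rightarrow> nat \<Rightarrow> bool" where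
  "dual_3net G1 G2 G3 n \<longleftrightarrow>
     (let G = (\<lambda>i::nat. if i = 1 then G1 else if i = 2 then G2 else G3) in
       (\<forall>i\<in>{1,2,3}. G i \<subseteq> proj_points \<and> finite (G i) \<and> card (G i) = n) \<and>
       (\<forall>i\<in>{1,2,3}. \<forall>j\<in>{1,2,3}. i \<noteq> j \<longrightarrow> G i \<inter> G j = {}) \<and>
       (\<forall>L. is_line L \<longrightarrow>
          (\<exists>i\<in>{1,2,3}. \<exists>j\<in>{1,2,3}. i \<noteq> j \<and> L \<inter> G i \<noteq> {} \<and> L \<inter> G j \<noteq> {}) \<longrightarrow>
          (\<forall>k\<in>{1,2,3}. card (L \<inter> G k) = 1)))"

definition conic_line_type :: "'k::field ppoint set \<Rightarrow> 'k ppoint set \<Rightarrow> 'k ppoint set \<Rightarrow> nat \<Rightarrow> 'k ppoint set \<Rightarrow> 'k ppoint set \<Rightarrow> bool" where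
  "conic_line_type G1 G2 G3 n C L \<longleftrightarrow> dual_3net G1 G2 G3 n \<and> n \<ge> 4 \<and>
     is_irred_conic C \<and> G1 \<union> G2 \<subseteq> C \<and> is_line L \<and> G3 \<subseteq> L"

end

theory Submission
  imports Defs
begin

text \<open>Choose coordinates in which the conic through Gamma1 and Gamma2 is the standard conic
  y^2 = x z, parametrised by t = (t0,t1) \<mapsto> (t0^2, t0 t1, t1^2); since Gamma1 has at least five points,
  the same coordinates also put the second conic in standard form. A point Q of Gamma3 induces the
  involution of the conic whose pairs are collinear with Q, and the net axioms say that these n
  involutions swap Gamma1 and Gamma2. If the line l of Gamma3 meets the conic in the points with
  parameters \<alpha> and \<beta>, the coordinate [\<alpha>,t]/[t,\<beta>] turns every such involution into r \<mapsto> \<kappa>/r, so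
  Gamma1 is the solution set of [\<alpha>,t]^n = c [t,\<beta>]^n (a tangent l would turn them into translations,
  which is impossible when n is invertible in the field). Thus Gamma1 determines the pair {\<alpha>,\<beta>}:
  writing the second net's equation in the coordinate above, its coefficients of x and x^2 must vanish,
  which forces {\<alpha>',\<beta>'} = {\<alpha>,\<beta>}, and hence s = l.\<close>

definition vscale :: "'k::field \<Rightarrow> 'k vec3 \<Rightarrow> 'k vec3" where
  "vscale c v = (case v of (x,y,z) \<Rightarrow> (c*x, c*y, c*z))"
definition vadd :: "'k::field vec3 \<Rightarrow> 'k vec3 \<Rightarrow> 'k vec3" where
  "vadd v w = (case v of (x,y,z) \<Rightarrow> case w of (a,b,c) \<Rightarrow> (x+a, y+b, z+c))"
definition cross :: "'k::field vec3 \<Rightarrow> 'k vec3 \<Rightarrow> 'k vec3" where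
  "cross v w = (case v of (a1,a2,a3) \<Rightarrow> case w of (b1,b2,b3) \<Rightarrow>
     (a2*b3 - a3*b2, a3*b1 - a1*b3, a1*b2 - a2*b1))"
definition det3 :: "'k::field vec3 \<Rightarrow> 'k vec3 \<Rightarrow> 'k vec3 \<Rightarrow> 'k" where
  "det3 a b c = lin a (cross b c)"
definition std_form :: "'k::field vec3 \<Rightarrow> 'k" where
  "std_form v = (case v of (x,y,z) \<Rightarrow> y^2 - x*z)"
text \<open>veronese parametrises the standard conic std_form = 0; chord a b are the coordinates of the line
  through veronese a and veronese b, and residual w s is the parameter of the second point in which the line
  through w and veronese s meets the standard conic (see lin_chord_veronese and det2_residual).\<close>
definition veronese :: "'k::field \<times> 'k \<Rightarrow> 'k vec3" where
  "veronese t = (case t of (t0,t1) \<Rightarrow> (t0^2, t0*t1, t1^2))"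
definition chord :: "'k::field \<times> 'k \<Rightarrow> 'k \<times> 'k \<Rightarrow> 'k vec3" where
  "chord a b = (case a of (a0,a1) \<Rightarrow> case b of (b0,b1) \<Rightarrow> (a1*b1, -(a0*b1 + a1*b0), a0*b0))"
definition det2 :: "'k::field \<times> 'k \<Rightarrow> 'k \<times> 'k \<Rightarrow> 'k" where
  "det2 a b = (case a of (a0,a1) \<Rightarrow> case b of (b0,b1) \<Rightarrow> a0*b1 - a1*b0)"
definition vscale2 :: "'k::field \<Rightarrow> 'k \<times> 'k \<Rightarrow> 'k \<times> 'k" where
  "vscale2 c s = (case s of (s0,s1) \<Rightarrow> (c*s0, c*s1))"
definition residual :: "'k::field vec3 \<Rightarrow> 'k \<times> 'k \<Rightarrow> 'k \<times> 'k" where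
  "residual w s = (case w of (w1,w2,w3) \<Rightarrow> case s of (s0,s1) \<Rightarrow> (w2*s0 - w1*s1, w3*s0 - w2*s1))"
definition frame_map :: "'k::field vec3 \<times> 'k vec3 \<times> 'k vec3 \<Rightarrow> 'k vec3 \<Rightarrow> 'k vec3" where
  "frame_map V w = (case V of (V0,V1,V2) \<Rightarrow> case w of (x,y,z) \<Rightarrow> vadd (vscale x V0) (vadd (vscale y V1) (vscale z V2)))"
definition frame_det :: "'k::field vec3 \<times> 'k vec3 \<times> 'k vec3 \<Rightarrow> 'k" where
  "frame_det V = (case V of (V0,V1,V2) \<Rightarrow> det3 V0 V1 V2)"
definition frame_inv :: "'k::field vec3 \<times> 'k vec3 \<times> 'k vec3 \<Rightarrow> 'k vec3 \<Rightarrow> 'k vec3" where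
  "frame_inv V v = (case V of (V0,V1,V2) \<Rightarrow> vscale (1 / frame_det V) (det3 v V1 V2, det3 V0 v V2, det3 V0 V1 v))"
definition frame_dual :: "'k::field vec3 \<times> 'k vec3 \<times> 'k vec3 \<Rightarrow> 'k vec3 \<Rightarrow> 'k vec3" where
  "frame_dual V u = (case V of (V0,V1,V2) \<Rightarrow> (lin u V0, lin u V1, lin u V2))"
definition polar :: "'k::field vec3 \<Rightarrow> 'k vec3 \<Rightarrow> 'k vec3 \<Rightarrow> 'k vec3 \<Rightarrow> 'k" where
  "polar A B v w = quad A B (vadd v w) - quad A B v - quad A B w"

lemmas vec_defs = vscale_def vadd_def cross_def det3_def std_form_def veronese_def chord_def det2_def vscale2_def residual_def
  frame_map_def frame_det_def frame_inv_def frame_dual_def polar_def lin_def quad_def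

lemma det3_veronese_point: "det3 (veronese s) w (veronese t) = - det2 s t * lin (chord s t) w"
  by (cases s; cases t; cases w) (simp add: vec_defs algebra_simps power2_eq_square)
lemma det3_frame_map: "det3 (frame_map V a) (frame_map V b) (frame_map V c) = frame_det V * det3 a b c"
  by (cases V; cases a; cases b; cases c; cases "fst V"; cases "fst (snd V)"; cases "snd (snd V)")
    (simp add: vec_defs algebra_simps)
lemma det2_residual: "det2 (residual w s) t = - lin (chord s t) w"
  by (cases s; cases t; cases w) (simp add: vec_defs algebra_simps)
lemma lin_chord_veronese: "lin (chord a b) (veronese t) = det2 t a * det2 t b"
  by (cases a; cases b; cases t) (simp add: vec_defs algebra_simps power2_eq_square)
lemma residual_zero: "residual w (0,0) = (0,0)"
  by (cases w) (simp add: residual_def)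
lemma residual_residual: "residual w (residual w s) = vscale2 (std_form w) s"
  by (cases s; cases w) (simp add: vec_defs algebra_simps power2_eq_square)
lemma lin_cross: "lin (cross a b) c = det3 a b c"
  by (cases a; cases b; cases c) (simp add: vec_defs algebra_simps)
lemma lin_vscale: "lin u (vscale c v) = c * lin u v"
  by (cases u; cases v) (simp add: vec_defs algebra_simps)
lemma lin_vscale_left: "lin (vscale c u) v = c * lin u v"
  by (cases u; cases v) (simp add: vec_defs algebra_simps)
lemma quad_vscale: "quad A B (vscale c v) = c^2 * quad A B v"
  by (cases A; cases B; cases v) (simp add: vec_defs algebra_simps power2_eq_square)
lemma vscale_vscale: "vscale a (vscale b v) = vscale (a*b) v"
  by (cases v) (simp add: vec_defs)
lemma vscale_1: "vscale 1 v = v"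
  by (cases v) (simp add: vec_defs)
lemma vscale_0_iff: "(vscale c v = (0,0,0)) \<longleftrightarrow> c = 0 \<or> v = (0,0,0)"
  by (cases v) (auto simp: vec_defs)
lemma vscale2_1: "vscale2 1 v = v"
  by (cases v) (simp add: vec_defs)
lemma vscale2_0_iff: "(vscale2 c v = (0,0)) \<longleftrightarrow> c = 0 \<or> v = (0,0)"
  by (cases v) (auto simp: vec_defs)
lemma det2_vscale2_l: "det2 (vscale2 c a) b = c * det2 a b"
  by (cases a; cases b) (simp add: vec_defs algebra_simps)
lemma det2_vscale2_r: "det2 a (vscale2 c b) = c * det2 a b"
  by (cases a; cases b) (simp add: vec_defs algebra_simps)
lemma det2_self: "det2 a a = 0"
  by (cases a) (simp add: vec_defs algebra_simps)
lemma det2_swap: "det2 a b = - det2 b a"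
  by (cases a; cases b) (simp add: vec_defs algebra_simps)
lemma veronese_vscale2: "veronese (vscale2 c t) = vscale (c^2) (veronese t)"
  by (cases t) (simp add: vec_defs algebra_simps power2_eq_square)
lemma frame_map_vscale: "frame_map V (vscale c w) = vscale c (frame_map V w)"
  by (cases V; cases w; cases "fst V"; cases "fst (snd V)"; cases "snd (snd V)") (simp add: vec_defs algebra_simps)
lemma chord_sym: "chord a b = chord b a"
  by (cases a; cases b) (simp add: vec_defs algebra_simps)
lemma chord_vscale2: "chord (vscale2 x a) (vscale2 y b) = vscale (x*y) (chord a b)"
  by (cases a; cases b) (simp add: vec_defs algebra_simps)
lemma veronese_nz: "t \<noteq> (0,0) \<Longrightarrow> veronese t \<noteq> (0,0,0)"
  by (cases t) (auto simp: vec_defs)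

lemma cramer3_frame: "frame_map (V0,V1,V2) (det3 v V1 V2, det3 V0 v V2, det3 V0 V1 v) = vscale (det3 V0 V1 V2) v"
  by (cases V0; cases V1; cases V2; cases v) (simp add: vec_defs algebra_simps)
lemma cramer3_frame': "(det3 (frame_map (V0,V1,V2) w) V1 V2, det3 V0 (frame_map (V0,V1,V2) w) V2, det3 V0 V1 (frame_map (V0,V1,V2) w))
   = vscale (det3 V0 V1 V2) w"
  by (cases V0; cases V1; cases V2; cases w) (simp add: vec_defs algebra_simps)

lemma frame_map_inv: "frame_det V \<noteq> 0 \<Longrightarrow> frame_map V (frame_inv V v) = v"
proof -
  assume d: "frame_det V \<noteq> 0"
  obtain V0 V1 V2 where V: "V = (V0,V1,V2)" by (cases V) auto
  have "frame_map V (frame_inv V v) = vscale (1/frame_det V) (frame_map V (det3 v V1 V2, det3 V0 v V2, det3 V0 V1 v))"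
    by (simp add: V frame_inv_def frame_map_vscale)
  also have "\<dots> = v" using d by (simp add: V cramer3_frame vscale_vscale frame_det_def vscale_1)
  finally show ?thesis .
qed

lemma frame_inv_map: "frame_det V \<noteq> 0 \<Longrightarrow> frame_inv V (frame_map V w) = w"
proof -
  assume d: "frame_det V \<noteq> 0"
  obtain V0 V1 V2 where V: "V = (V0,V1,V2)" by (cases V) auto
  show ?thesis using d by (simp add: V frame_inv_def cramer3_frame' vscale_vscale frame_det_def vscale_1)
qed

lemma frame_map_inj: "frame_det V \<noteq> 0 \<Longrightarrow> frame_map V w = frame_map V w' \<Longrightarrow> w = w'"
  by (metis frame_inv_map)

lemma frame_map_0: "frame_map V (0,0,0) = (0,0,0)"
  by (cases V; cases "fst V"; cases "fst (snd V)"; cases "snd (snd V)") (simp add: vec_defs)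

lemma frame_map_nz: "frame_det V \<noteq> 0 \<Longrightarrow> w \<noteq> (0,0,0) \<Longrightarrow> frame_map V w \<noteq> (0,0,0)"
  by (metis frame_map_0 frame_map_inj)

lemma lin_frame_map: "lin u (frame_map V w) = lin (frame_dual V u) w"
  by (cases V; cases w; cases u; cases "fst V"; cases "fst (snd V)"; cases "snd (snd V)") (simp add: vec_defs algebra_simps)

lemma frame_dual_eq_0: "frame_det V \<noteq> 0 \<Longrightarrow> frame_dual V u = (0,0,0) \<Longrightarrow> u = (0,0,0)"
proof -
  assume d: "frame_det V \<noteq> 0" and t: "frame_dual V u = (0,0,0)"
  have "\<And>v. lin u v = 0"
  proof -
    fix v
    have "lin u v = lin u (frame_map V (frame_inv V v))" using d by (simp add: frame_map_inv)
    also have "\<dots> = 0" by (simp only: lin_frame_map t) (simp add: lin_def split: prod.splits)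
    finally show "lin u v = 0" .
  qed
  from this[of "(1,0,0)"] this[of "(0,1,0)"] this[of "(0,0,1)"] show ?thesis
    by (cases u) (simp add: lin_def)
qed

lemma frame_dual_vscale: "frame_dual V (vscale c u) = vscale c (frame_dual V u)"
  by (cases V; cases u; cases "fst V"; cases "fst (snd V)"; cases "snd (snd V)") (simp add: vec_defs algebra_simps)

lemma frame_dual_diff: "frame_dual V (vadd u (vscale (-1) u')) = vadd (frame_dual V u) (vscale (-1) (frame_dual V u'))"
  by (cases V; cases u; cases u'; cases "fst V"; cases "fst (snd V)"; cases "snd (snd V)") (simp add: vec_defs algebra_simps)

lemma pt_of_iff: "w \<in> pt_of v \<longleftrightarrow> (\<exists>c. c \<noteq> 0 \<and> w = vscale c v)"
  by (cases v) (auto simp: pt_of_def vscale_def)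

lemma pt_of_mem: "v \<in> pt_of v"
  using pt_of_iff vscale_1 by (metis one_neq_zero)

lemma pt_of_vscale: "c \<noteq> 0 \<Longrightarrow> pt_of (vscale c v) = pt_of v"
proof
  assume c: "c \<noteq> 0"
  show "pt_of (vscale c v) \<subseteq> pt_of v"
  proof
    fix x assume "x \<in> pt_of (vscale c v)"
    then obtain d where d: "d \<noteq> 0" "x = vscale d (vscale c v)" by (auto simp: pt_of_iff)
    then have "x = vscale (d*c) v" "d * c \<noteq> 0" using c by (auto simp: vscale_vscale)
    then show "x \<in> pt_of v" unfolding pt_of_iff by blast
  qed
  show "pt_of v \<subseteq> pt_of (vscale c v)"
  proof
    fix x assume "x \<in> pt_of v"
    then obtain d where d: "d \<noteq> 0" "x = vscale d v" by (auto simp: pt_of_iff)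
    have "x = vscale (d / c) (vscale c v)" using c d by (simp add: vscale_vscale)
    then show "x \<in> pt_of (vscale c v)" using c d unfolding pt_of_iff by (intro exI[of _ "d/c"]) simp
  qed
qed

lemma pt_of_eq: "pt_of v = pt_of w \<Longrightarrow> \<exists>c. c \<noteq> 0 \<and> w = vscale c v"
  using pt_of_mem pt_of_iff by metis

lemma in_line_iff: "v \<noteq> (0,0,0) \<Longrightarrow> pt_of v \<in> proj_line u \<longleftrightarrow> lin u v = 0"
proof
  assume "pt_of v \<in> proj_line u"
  then obtain v' where v': "v' \<noteq> (0,0,0)" "lin u v' = 0" "pt_of v = pt_of v'"
    by (auto simp: proj_line_def)
  then obtain c where "v = vscale c v'" using pt_of_eq by metis
  then show "lin u v = 0" using v' by (simp add: lin_vscale)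
next
  assume "v \<noteq> (0,0,0)" "lin u v = 0"
  then show "pt_of v \<in> proj_line u" unfolding proj_line_def by blast
qed

lemma in_conic_iff: "v \<noteq> (0,0,0) \<Longrightarrow> pt_of v \<in> conic_pts A B \<longleftrightarrow> quad A B v = 0"
proof
  assume "pt_of v \<in> conic_pts A B"
  then obtain v' where v': "v' \<noteq> (0,0,0)" "quad A B v' = 0" "pt_of v = pt_of v'"
    by (auto simp: conic_pts_def)
  then obtain c where "v = vscale c v'" using pt_of_eq by metis
  then show "quad A B v = 0" using v' by (simp add: quad_vscale)
next
  assume "v \<noteq> (0,0,0)" "quad A B v = 0"
  then show "pt_of v \<in> conic_pts A B" unfolding conic_pts_def by blast
qed

lemma proj_pointsE: "P \<in> proj_points \<Longrightarrow> (\<And>v. v \<noteq> (0,0,0) \<Longrightarrow> P = pt_of v \<Longrightarrow> thesis) \<Longrightarrow> thesis"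
  by (auto simp: proj_points_def)

lemma conic_ptsE: "P \<in> conic_pts A B \<Longrightarrow> (\<And>v. v \<noteq> (0,0,0) \<Longrightarrow> P = pt_of v \<Longrightarrow> quad A B v = 0 \<Longrightarrow> thesis) \<Longrightarrow> thesis"
  by (auto simp: conic_pts_def)

lemma cross_eq_0_imp_multiple: "cross v w = (0,0,0) \<Longrightarrow> v \<noteq> (0,0,0) \<Longrightarrow> \<exists>c. w = vscale c v"
proof -
  assume cr: "cross v w = (0,0,0)" and v: "v \<noteq> (0,0,0)"
  obtain a b c where V: "v = (a,b,c)" by (cases v) auto
  obtain x y z where W: "w = (x,y,z)" by (cases w) auto
  have e: "b*z = c*y" "c*x = a*z" "a*y = b*x" using cr by (auto simp: V W cross_def)
  show ?thesis
  proof (cases "a = 0")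
    case False
    have "w = vscale (x/a) v" using False e by (simp add: V W vscale_def field_simps)
    then show ?thesis by blast
  next
    case a: True
    show ?thesis
    proof (cases "b = 0")
      case False
      have "w = vscale (y/b) v" using False a e by (simp add: V W vscale_def field_simps)
      then show ?thesis by blast
    next
      case True
      then have "c \<noteq> 0" using a v V by auto
      have "w = vscale (z/c) v" using \<open>c \<noteq> 0\<close> True a e by (simp add: V W vscale_def field_simps)
      then show ?thesis by blast
    qed
  qed
qed

lemma det2_eq_0_imp_multiple: "det2 s t = 0 \<Longrightarrow> s \<noteq> (0,0) \<Longrightarrow> \<exists>c. t = vscale2 c s"
proof -
  assume d: "det2 s t = 0" and s: "s \<noteq> (0,0)"
  obtain a b where S: "s = (a,b)" by (cases s) auto
  obtain x y where T: "t = (x,y)" by (cases t) auto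
  have e: "a*y = b*x" using d by (simp add: S T det2_def)
  show ?thesis
  proof (cases "a = 0")
    case False
    have "t = vscale2 (x/a) s" using False e by (simp add: S T vscale2_def field_simps)
    then show ?thesis by blast
  next
    case True
    then have "b \<noteq> 0" using s S by auto
    have "t = vscale2 (y/b) s" using \<open>b \<noteq> 0\<close> True e by (simp add: S T vscale2_def field_simps)
    then show ?thesis by blast
  qed
qed

lemma cross_nz: "v \<noteq> (0,0,0) \<Longrightarrow> w \<noteq> (0,0,0) \<Longrightarrow> pt_of v \<noteq> pt_of w \<Longrightarrow> cross v w \<noteq> (0,0,0)"
proof
  assume v: "v \<noteq> (0,0,0)" and w: "w \<noteq> (0,0,0)" and ne: "pt_of v \<noteq> pt_of w" and c: "cross v w = (0,0,0)"
  obtain c where "w = vscale c v" using cross_eq_0_imp_multiple[OF c v] by blast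
  moreover have "c \<noteq> 0" using w calculation by (auto simp: vscale_0_iff)
  ultimately show False using ne pt_of_vscale by metis
qed

lemma line_through: "v \<noteq> (0,0,0) \<Longrightarrow> w \<noteq> (0,0,0) \<Longrightarrow> pt_of v \<noteq> pt_of w \<Longrightarrow>
   is_line (proj_line (cross v w)) \<and> pt_of v \<in> proj_line (cross v w) \<and> pt_of w \<in> proj_line (cross v w)"
proof -
  assume a: "v \<noteq> (0,0,0)" "w \<noteq> (0,0,0)" "pt_of v \<noteq> pt_of w"
  have "lin (cross v w) v = 0" "lin (cross v w) w = 0"
    by (cases v; cases w; simp add: vec_defs algebra_simps)+
  then show ?thesis using a cross_nz[of v w] in_line_iff[of v "cross v w"] in_line_iff[of w "cross v w"]
    unfolding is_line_def by blast
qed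

section \<open>Conics containing a line are reducible\<close>

lemma vscale_vadd: "vscale c (vadd a b) = vadd (vscale c a) (vscale c b)"
  by (cases a; cases b) (simp add: vec_defs algebra_simps)
lemma vscale_0: "vscale 0 v = (0,0,0)"
  by (cases v) (simp add: vec_defs)
lemma vadd_0: "vadd a (0,0,0) = a"
  by (cases a) (simp add: vec_defs)

lemma quad_lincomb3: "quad A B (vadd (vscale a P) (vadd (vscale b R) (vscale c T))) =
   a^2 * quad A B P + b^2 * quad A B R + c^2 * quad A B T
   + a*b * polar A B P R + a*c * polar A B P T + b*c * polar A B R T"
  by (cases A; cases B; cases P; cases R; cases T) (simp add: vec_defs algebra_simps power2_eq_square)

lemma cramer3_identity: "vscale (det3 v w T) x = vadd (vscale (det3 x w T) v) (vadd (vscale (det3 v x T) w) (vscale (det3 v w x) T))"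
  by (cases v; cases w; cases T; cases x) (simp add: vec_defs algebra_simps)

lemma det3_lin: "det3 v w T = lin (cross v w) T"
  by (cases v; cases w; cases T) (simp add: vec_defs algebra_simps)

lemma det3_exists_nonzero: "cross v w \<noteq> (0,0,0) \<Longrightarrow> \<exists>T. det3 v w T \<noteq> 0"
proof -
  assume c: "cross v w \<noteq> (0,0,0)"
  obtain a b d where C: "cross v w = (a,b,d)" by (cases "cross v w") auto
  have "det3 v w (1,0,0) = a" "det3 v w (0,1,0) = b" "det3 v w (0,0,1) = d"
    by (simp_all add: det3_lin C lin_def)
  then show ?thesis using c C by (metis)
qed

lemma det3_eq_0_imp_span: "det3 v w T \<noteq> 0 \<Longrightarrow> det3 v w x = 0 \<Longrightarrow> \<exists>a b. x = vadd (vscale a v) (vscale b w)"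
proof -
  assume D: "det3 v w T \<noteq> 0" and x: "det3 v w x = 0"
  have "vscale (det3 v w T) x = vadd (vscale (det3 x w T) v) (vscale (det3 v x T) w)"
    using cramer3_identity[of v w T x] x by (simp add: vscale_0 vadd_0)
  then have "vscale (1/det3 v w T) (vscale (det3 v w T) x) = vadd (vscale (det3 x w T / det3 v w T) v) (vscale (det3 v x T / det3 v w T) w)"
    by (simp add: vscale_vadd vscale_vscale)
  then show ?thesis using D by (auto simp: vscale_vscale vscale_1)
qed

lemma factor_identity: "det3 P R v * (det3 v R T * a + det3 P v T * b + det3 P R v * c) =
  lin (cross P R) v * lin (vadd (vscale a (cross R T)) (vadd (vscale b (cross T P)) (vscale c (cross P R)))) v"
  by (cases v; cases R; cases T; cases P) (simp add: vec_defs algebra_simps)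

lemma conic_through_line_reducible:
  assumes "quad A B P = 0" "quad A B R = 0" "polar A B P R = 0" "cross P R \<noteq> (0,0,0)"
  shows "\<not> irreducible_qf A B"
proof -
  obtain T where D: "det3 P R T \<noteq> 0" using det3_exists_nonzero assms(4) by blast
  define D where "D = det3 P R T"
  define u where "u = vscale (1/D^2) (cross P R)"
  define w where "w = vadd (vscale (polar A B P T) (cross R T)) (vadd (vscale (polar A B R T) (cross T P)) (vscale (quad A B T) (cross P R)))"
  have "\<forall>v. quad A B v = lin u v * lin w v"
  proof
    fix v
    have e: "vscale D v = vadd (vscale (det3 v R T) P) (vadd (vscale (det3 P v T) R) (vscale (det3 P R v) T))"
      unfolding D_def by (rule cramer3_identity)
    have "D^2 * quad A B v = quad A B (vscale D v)" by (simp add: quad_vscale)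
    also have "\<dots> = det3 P R v * (det3 v R T * polar A B P T + det3 P v T * polar A B R T + det3 P R v * quad A B T)"
      unfolding e quad_lincomb3 using assms by (simp add: algebra_simps power2_eq_square)
    also have "\<dots> = lin (cross P R) v * lin w v"
      unfolding w_def by (rule factor_identity)
    finally have "D^2 * quad A B v = lin (cross P R) v * lin w v" .
    then show "quad A B v = lin u v * lin w v"
      using D unfolding u_def D_def by (simp add: lin_vscale_left field_simps)
  qed
  then show ?thesis unfolding irreducible_qf_def by blast
qed

section \<open>Parametrisation of an irreducible conic\<close>

definition conic_frame :: "'k::field vec3 \<Rightarrow> 'k vec3 \<Rightarrow> 'k vec3 \<times> 'k vec3 \<times> 'k vec3 \<Rightarrow> 'k \<Rightarrow> bool" where
  "conic_frame A B V k \<longleftrightarrow> frame_det V \<noteq> 0 \<and> k \<noteq> 0 \<and> (\<forall>w. quad A B (frame_map V w) = k * std_form w)"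

lemma polar_nonzero:
  assumes "irreducible_qf A B" "p \<noteq> (0,0,0)" "r \<noteq> (0,0,0)" "quad A B p = 0" "quad A B r = 0" "pt_of p \<noteq> pt_of r"
  shows "polar A B p r \<noteq> 0"
  using conic_through_line_reducible[of A B p r] cross_nz[of p r] assms by blast

lemma det3_conic_points_nonzero:
  assumes irr: "irreducible_qf A B" and nz: "p0 \<noteq> (0,0,0)" "p1 \<noteq> (0,0,0)" "p2 \<noteq> (0,0,0)"
    and q: "quad A B p0 = 0" "quad A B p1 = 0" "quad A B p2 = 0"
    and d: "pt_of p0 \<noteq> pt_of p1" "pt_of p0 \<noteq> pt_of p2" "pt_of p1 \<noteq> pt_of p2"
  shows "det3 p0 p1 p2 \<noteq> 0"
proof
  assume z: "det3 p0 p1 p2 = 0"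
  obtain T where T: "det3 p0 p1 T \<noteq> 0" using det3_exists_nonzero cross_nz[OF nz(1,2) d(1)] by blast
  obtain a b where ab: "p2 = vadd (vscale a p0) (vscale b p1)" using det3_eq_0_imp_span[OF T z] by blast
  have "p2 = vadd (vscale a p0) (vadd (vscale b p1) (vscale 0 T))" using ab by (simp add: vscale_0 vadd_0)
  then have "quad A B p2 = a*b * polar A B p0 p1" using q by (simp add: quad_lincomb3)
  then have "a = 0 \<or> b = 0" using q polar_nonzero[OF irr nz(1,2) q(1,2) d(1)] by simp
  then show False
  proof
    assume "a = 0"
    then have "p2 = vscale b p1" using ab by (cases p1) (simp add: vec_defs)
    moreover then have "b \<noteq> 0" using nz(3) by (auto simp: vscale_0_iff)
    ultimately show False using d(3) pt_of_vscale by metis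
  next
    assume "b = 0"
    then have "p2 = vscale a p0" using ab by (cases p0) (simp add: vec_defs)
    moreover then have "a \<noteq> 0" using nz(3) by (auto simp: vscale_0_iff)
    ultimately show False using d(2) pt_of_vscale by metis
  qed
qed

lemma frame_map_param_id:
  "frame_map (vscale l0 p0, vadd p1 (vadd (vscale (-l0) p0) (vscale (-l2) p2)), vscale l2 p2) (x,y,z)
   = vadd (vscale ((x-y)*l0) p0) (vadd (vscale y p1) (vscale ((z-y)*l2) p2))"
  by (cases p0; cases p1; cases p2) (simp add: vec_defs algebra_simps)

lemma frame_det_param_id:
  "frame_det (vscale l0 p0, vadd p1 (vadd (vscale (-l0) p0) (vscale (-l2) p2)), vscale l2 p2) = l0 * l2 * det3 p0 p1 p2"
  by (cases p0; cases p1; cases p2) (simp add: vec_defs algebra_simps)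

lemma conic_frame_exists:
  assumes irr: "irreducible_qf A B" and nz: "p0 \<noteq> (0,0,0)" "p1 \<noteq> (0,0,0)" "p2 \<noteq> (0,0,0)"
    and q: "quad A B p0 = 0" "quad A B p1 = 0" "quad A B p2 = 0"
    and d: "pt_of p0 \<noteq> pt_of p1" "pt_of p0 \<noteq> pt_of p2" "pt_of p1 \<noteq> pt_of p2"
  shows "\<exists>V k. conic_frame A B V k"
proof -
  define b01 where "b01 = polar A B p0 p1"
  define b02 where "b02 = polar A B p0 p2"
  define b12 where "b12 = polar A B p1 p2"
  have nz01: "b01 \<noteq> 0" unfolding b01_def using polar_nonzero irr nz q d by blast
  have nz02: "b02 \<noteq> 0" unfolding b02_def using polar_nonzero irr nz q d by blast
  have nz12: "b12 \<noteq> 0" unfolding b12_def using polar_nonzero irr nz q d by blast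
  define l0 where "l0 = b12 / b02"
  define l2 where "l2 = b01 / b02"
  define V where "V = (vscale l0 p0, vadd p1 (vadd (vscale (-l0) p0) (vscale (-l2) p2)), vscale l2 p2)"
  define k where "k = - (b12 * b01 / b02)"
  have "frame_det V \<noteq> 0" unfolding V_def frame_det_param_id l0_def l2_def
    using det3_conic_points_nonzero[OF irr nz q d] nz01 nz02 nz12 by simp
  moreover have "k \<noteq> 0" unfolding k_def using nz01 nz02 nz12 by simp
  moreover have "\<forall>w. quad A B (frame_map V w) = k * std_form w"
  proof
    fix w :: "'a vec3"
    obtain x y z where w: "w = (x,y,z)" by (cases w) auto
    have "quad A B (frame_map V w) = (x-y)*l0*y*b01 + (x-y)*l0*((z-y)*l2)*b02 + y*((z-y)*l2)*b12"
      unfolding V_def w frame_map_param_id quad_lincomb3 using q by (simp add: b01_def b02_def b12_def)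
    also have "\<dots> = k * std_form w"
      unfolding k_def l0_def l2_def w std_form_def using nz02 by (simp add: field_simps power2_eq_square)
    finally show "quad A B (frame_map V w) = k * std_form w" .
  qed
  ultimately show ?thesis unfolding conic_frame_def by blast
qed

definition frame_point :: "'k::field vec3 \<times> 'k vec3 \<times> 'k vec3 \<Rightarrow> 'k \<times> 'k \<Rightarrow> 'k ppoint" where
  "frame_point V t = pt_of (frame_map V (veronese t))"

lemma std_form_zero_imp_veronese: "w \<noteq> (0,0,0) \<Longrightarrow> std_form w = 0 \<Longrightarrow> \<exists>t c. t \<noteq> (0,0) \<and> c \<noteq> 0 \<and> w = vscale c (veronese t)"
proof -
  assume nz: "w \<noteq> (0,0,0)" and q: "std_form w = 0"
  obtain x y z where w: "w = (x,y,z)" by (cases w) auto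
  have e: "y^2 = x*z" using q by (simp add: w std_form_def)
  show ?thesis
  proof (cases "x = 0")
    case False
    have "w = vscale x (veronese (1, y/x))" using False e by (simp add: w vec_defs field_simps power2_eq_square)
    then show ?thesis using False by (metis prod.inject zero_neq_one)
  next
    case True
    then have "y = 0" using e by simp
    then have "z \<noteq> 0" using nz True w by simp
    have "w = vscale z (veronese (0, 1))" using True \<open>y = 0\<close> by (simp add: w vec_defs)
    then show ?thesis using \<open>z \<noteq> 0\<close> by (metis prod.inject zero_neq_one)
  qed
qed

lemma frame_map_veronese_nonzero: "frame_det V \<noteq> 0 \<Longrightarrow> t \<noteq> (0,0) \<Longrightarrow> frame_map V (veronese t) \<noteq> (0,0,0)"
  using frame_map_nz veronese_nz by blast

lemma conic_frame_surj:
  assumes g: "conic_frame A B V k" and P: "P \<in> conic_pts A B"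
  shows "\<exists>t. t \<noteq> (0,0) \<and> P = frame_point V t"
proof -
  obtain v where v: "v \<noteq> (0,0,0)" "P = pt_of v" "quad A B v = 0" using P by (rule conic_ptsE)
  have d: "frame_det V \<noteq> 0" and k: "k \<noteq> 0" and qq: "\<And>w. quad A B (frame_map V w) = k * std_form w" using g by (auto simp: conic_frame_def)
  define w where "w = frame_inv V v"
  have vw: "v = frame_map V w" unfolding w_def using d by (simp add: frame_map_inv)
  have "w \<noteq> (0,0,0)" using v(1) vw frame_map_0 by metis
  moreover have "std_form w = 0" using qq[of w] v(3) vw k by simp
  ultimately obtain t c where tc: "t \<noteq> (0,0)" "c \<noteq> 0" "w = vscale c (veronese t)" using std_form_zero_imp_veronese by blast
  have "v = vscale c (frame_map V (veronese t))" using vw tc by (simp add: frame_map_vscale)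
  then have "P = frame_point V t" using v(2) tc(2) pt_of_vscale unfolding frame_point_def by metis
  then show ?thesis using tc by blast
qed

lemma veronese_proportional_imp_det2: "veronese t' = vscale c (veronese t) \<Longrightarrow> det2 t t' = 0"
proof -
  assume h: "veronese t' = vscale c (veronese t)"
  obtain a b where t: "t = (a,b)" by (cases t) auto
  obtain x y where t': "t' = (x,y)" by (cases t') auto
  have e: "x^2 = c*a^2" "x*y = c*(a*b)" "y^2 = c*b^2" using h by (auto simp: t t' vec_defs)
  have "(a*y - b*x)^2 = a^2*y^2 - 2*(a*b)*(x*y) + b^2*x^2" by (simp add: algebra_simps power2_eq_square)
  also have "\<dots> = 0" unfolding e by (simp add: algebra_simps power2_eq_square)
  finally show ?thesis by (simp add: t t' det2_def)
qed

lemma frame_point_eq_iff: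
  assumes d: "frame_det V \<noteq> 0" and t: "t \<noteq> (0,0)" and t': "t' \<noteq> (0,0)"
  shows "frame_point V t = frame_point V t' \<longleftrightarrow> det2 t t' = 0"
proof
  assume "frame_point V t = frame_point V t'"
  then obtain c where c: "frame_map V (veronese t') = vscale c (frame_map V (veronese t))" unfolding frame_point_def using pt_of_eq by metis
  then have "frame_map V (veronese t') = frame_map V (vscale c (veronese t))" by (simp add: frame_map_vscale)
  then have "veronese t' = vscale c (veronese t)" using frame_map_inj[OF d] by blast
  then show "det2 t t' = 0" by (rule veronese_proportional_imp_det2)
next
  assume "det2 t t' = 0"
  then obtain c where c: "t' = vscale2 c t" using det2_eq_0_imp_multiple t by blast
  then have "c \<noteq> 0" using t' by (auto simp: vscale2_0_iff)
  have "frame_map V (veronese t') = vscale (c^2) (frame_map V (veronese t))" by (simp add: c veronese_vscale2 frame_map_vscale)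
  then show "frame_point V t = frame_point V t'" unfolding frame_point_def using pt_of_vscale \<open>c \<noteq> 0\<close> by (metis power_not_zero)
qed

lemma conic_frame_det: "conic_frame A B V k \<Longrightarrow> frame_det V \<noteq> 0"
  by (simp add: conic_frame_def)

definition frame_param :: "'k::field vec3 \<times> 'k vec3 \<times> 'k vec3 \<Rightarrow> 'k ppoint \<Rightarrow> 'k \<times> 'k" where
  "frame_param V P = (SOME t. t \<noteq> (0,0) \<and> P = frame_point V t)"

lemma frame_param:
  assumes "conic_frame A B V k" "P \<in> conic_pts A B"
  shows "frame_param V P \<noteq> (0,0)" "frame_point V (frame_param V P) = P"
proof -
  have "\<exists>t. t \<noteq> (0,0) \<and> P = frame_point V t" using conic_frame_surj assms by blast
  then have "frame_param V P \<noteq> (0,0) \<and> P = frame_point V (frame_param V P)"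
    unfolding frame_param_def by (rule someI_ex)
  then show "frame_param V P \<noteq> (0,0)" "frame_point V (frame_param V P) = P" by auto
qed

lemma frame_param_image:
  assumes g: "conic_frame A B V k" and S: "S \<subseteq> conic_pts A B"
  shows "card (frame_param V ` S) = card S"
    and "\<And>t. t \<in> frame_param V ` S \<Longrightarrow> t \<noteq> (0,0) \<and> frame_point V t \<in> S"
    and "\<And>t t'. t \<in> frame_param V ` S \<Longrightarrow> t' \<in> frame_param V ` S \<Longrightarrow> t \<noteq> t' \<Longrightarrow> det2 t t' \<noteq> 0"
proof -
  have p: "frame_param V P \<noteq> (0,0)" "frame_point V (frame_param V P) = P" if "P \<in> S" for P
    using frame_param[OF g] S that by auto
  have "inj_on (frame_param V) S" by (rule inj_onI) (metis p(2))
  then show "card (frame_param V ` S) = card S" by (rule card_image)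
  show "\<And>t. t \<in> frame_param V ` S \<Longrightarrow> t \<noteq> (0,0) \<and> frame_point V t \<in> S" using p by (metis imageE)
  show "\<And>t t'. t \<in> frame_param V ` S \<Longrightarrow> t' \<in> frame_param V ` S \<Longrightarrow> t \<noteq> t' \<Longrightarrow> det2 t t' \<noteq> 0"
    using p frame_point_eq_iff[OF conic_frame_det[OF g]] by (metis imageE)
qed

definition frame_coord :: "'k::field vec3 \<times> 'k vec3 \<times> 'k vec3 \<Rightarrow> 'k ppoint \<Rightarrow> 'k vec3" where
  "frame_coord V Q = (SOME w. w \<noteq> (0,0,0) \<and> Q = pt_of (frame_map V w))"

lemma frame_coord:
  assumes d: "frame_det V \<noteq> 0" and Q: "Q \<in> proj_points"
  shows "frame_coord V Q \<noteq> (0,0,0)" "pt_of (frame_map V (frame_coord V Q)) = Q"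
proof -
  obtain v where v: "v \<noteq> (0,0,0)" "Q = pt_of v" using Q by (rule proj_pointsE)
  have "v = frame_map V (frame_inv V v)" using d by (simp add: frame_map_inv)
  moreover then have "frame_inv V v \<noteq> (0,0,0)" using v frame_map_0 by metis
  ultimately have "\<exists>w. w \<noteq> (0,0,0) \<and> Q = pt_of (frame_map V w)" using v by metis
  then have "frame_coord V Q \<noteq> (0,0,0) \<and> Q = pt_of (frame_map V (frame_coord V Q))"
    unfolding frame_coord_def by (rule someI_ex)
  then show "frame_coord V Q \<noteq> (0,0,0)" "pt_of (frame_map V (frame_coord V Q)) = Q" by auto
qed

section \<open>Five points determine the conic\<close>

lemma roots_bound:
  fixes p :: "'k::field poly"
  assumes "p \<noteq> 0" "X \<subseteq> {x. poly p x = 0}"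
  shows "card X \<le> degree p"
proof -
  have "finite {x. poly p x = 0}" using assms(1) poly_roots_finite by blast
  then have "card X \<le> card {x. poly p x = 0}" using assms(2) card_mono by blast
  also have "\<dots> \<le> degree p" using card_poly_roots_bound assms(1) by blast
  finally show ?thesis .
qed

lemma binary_quartic_vanishing:
  fixes a d m f c :: "'k::field"
  assumes fin: "finite T" and card: "card T \<ge> 5" and nz: "\<forall>t\<in>T. t \<noteq> (0,0)"
    and dist: "\<forall>t\<in>T. \<forall>t'\<in>T. t \<noteq> t' \<longrightarrow> det2 t t' \<noteq> 0"
    and van: "\<forall>t\<in>T. a*(fst t)^4 + d*(fst t)^3*(snd t) + m*(fst t)^2*(snd t)^2 + f*(fst t)*(snd t)^3 + c*(snd t)^4 = 0"
  shows "a = 0 \<and> d = 0 \<and> m = 0 \<and> f = 0 \<and> c = 0"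
proof -
  define p where "p = [:c, f, m, d, a:]"
  define T' where "T' = {t\<in>T. snd t \<noteq> 0}"
  define X where "X = (\<lambda>t. fst t / snd t) ` T'"
  have Tsub: "T' \<subseteq> T" unfolding T'_def by blast
  have inj: "inj_on (\<lambda>t. fst t / snd t) T'"
  proof (rule inj_onI)
    fix t t' assume t: "t \<in> T'" "t' \<in> T'" "fst t / snd t = fst t' / snd t'"
    then have "det2 t t' = 0" unfolding T'_def by (cases t; cases t') (auto simp: det2_def field_simps)
    then show "t = t'" using dist t Tsub by blast
  qed
  have cardX: "card X = card T'" unfolding X_def using inj card_image by blast
  have roots: "X \<subseteq> {x. poly p x = 0}"
  proof
    fix x assume "x \<in> X"
    then obtain t where t: "t \<in> T'" "x = fst t / snd t" unfolding X_def by blast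
    obtain t0 t1 where tt: "t = (t0,t1)" by (cases t) auto
    have t1: "t1 \<noteq> 0" using t tt unfolding T'_def by auto
    have "t \<in> T" using t Tsub by blast
    then have "a*t0^4 + d*t0^3*t1 + m*t0^2*t1^2 + f*t0*t1^3 + c*t1^4 = 0" using van tt by fastforce
    then have "t1^4 * poly p (t0/t1) = 0" unfolding p_def using t1
      by (simp add: field_simps power2_eq_square power3_eq_cube power4_eq_xxxx)
    then show "x \<in> {x. poly p x = 0}" using t tt t1 by simp
  qed
  have atmost1: "card (T - T') \<le> Suc 0"
  proof (rule card_le_Suc0_iff_eq[THEN iffD2])
    show "finite (T - T')" using fin by blast
    show "\<forall>x\<in>T - T'. \<forall>y\<in>T - T'. x = y"
    proof (intro ballI)
      fix x y assume "x \<in> T - T'" "y \<in> T - T'"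
      then have "snd x = 0" "snd y = 0" "x \<in> T" "y \<in> T" unfolding T'_def by auto
      then have "det2 x y = 0" by (cases x; cases y) (simp add: det2_def)
      then show "x = y" using dist \<open>x \<in> T\<close> \<open>y \<in> T\<close> by blast
    qed
  qed
  have cT: "card T = card T' + card (T - T')"
  proof -
    have "T = T' \<union> (T - T')" using Tsub by blast
    moreover have "finite T'" using fin Tsub finite_subset by blast
    ultimately show ?thesis using fin card_Un_disjoint[of T' "T - T'"] by (metis Diff_disjoint finite_Diff)
  qed
  have degp: "degree p \<le> 4" unfolding p_def
    by (rule degree_le) (auto simp: coeff_pCons split: nat.splits)
  have "p = 0"
  proof (cases "T - T' = {}")
    case True
    then have "card (T - T') = 0" by (metis card.empty)
    then have "card X \<ge> 5" using cT card cardX by linarith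
    moreover have "p \<noteq> 0 \<Longrightarrow> card X \<le> degree p" using roots_bound[OF _ roots] by blast
    ultimately show ?thesis using degp by fastforce
  next
    case False
    then obtain t where t: "t \<in> T" "snd t = 0" unfolding T'_def by blast
    then have "fst t \<noteq> 0" using nz by (cases t) auto
    have "a*(fst t)^4 + d*(fst t)^3*(snd t) + m*(fst t)^2*(snd t)^2 + f*(fst t)*(snd t)^3 + c*(snd t)^4 = 0"
      using van t(1) by blast
    then have "a * (fst t)^4 = 0" using t(2) by simp
    then have a0: "a = 0" using \<open>fst t \<noteq> 0\<close> by simp
    have degp3: "degree p \<le> 3" unfolding p_def a0
      by (rule degree_le) (auto simp: coeff_pCons split: nat.splits)
    have "card X \<ge> 4" using cT card cardX atmost1 by simp
    moreover have "p \<noteq> 0 \<Longrightarrow> card X \<le> degree p" using roots_bound[OF _ roots] by blast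
    ultimately show ?thesis using degp3 by fastforce
  qed
  then show ?thesis unfolding p_def by simp
qed

lemma quad_simp: "quad (a,b,c) (d,e,f) (x,y,z) = a*x^2 + b*y^2 + c*z^2 + d*x*y + e*x*z + f*y*z"
  by (simp add: quad_def)

lemma quad_frame_map_coef:
  "quad A2 B2 (frame_map (V0,V1,V2) w) = quad (quad A2 B2 V0, quad A2 B2 V1, quad A2 B2 V2)
      (polar A2 B2 V0 V1, polar A2 B2 V0 V2, polar A2 B2 V1 V2) w"
proof -
  obtain x y z where w: "w = (x,y,z)" by (cases w) auto
  have "frame_map (V0,V1,V2) w = vadd (vscale x V0) (vadd (vscale y V1) (vscale z V2))" by (simp add: w frame_map_def)
  then show ?thesis by (simp only: quad_lincomb3 w) (simp only: quad_simp, simp add: algebra_simps)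
qed

lemma quad_veronese_quartic: "quad (a,b,c) (d,e,f) (veronese t) =
   a*(fst t)^4 + d*(fst t)^3*(snd t) + (b+e)*(fst t)^2*(snd t)^2 + f*(fst t)*(snd t)^3 + c*(snd t)^4"
  by (cases t) (simp add: quad_def veronese_def algebra_simps power2_eq_square power3_eq_cube power4_eq_xxxx)

lemma conic_frame_transfer:
  assumes g: "conic_frame A B V k" and irr2: "irreducible_qf A2 B2"
    and S1: "S \<subseteq> conic_pts A B" and S2: "S \<subseteq> conic_pts A2 B2" and fin: "finite S" and cS: "card S \<ge> 5"
  shows "\<exists>k2. conic_frame A2 B2 V k2"
proof -
  have d: "frame_det V \<noteq> 0" using conic_frame_det[OF g] .
  define T where "T = frame_param V ` S"
  note T = frame_param_image[OF g S1, folded T_def]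
  obtain V0 V1 V2 where V: "V = (V0,V1,V2)" by (cases V) auto
  obtain a b c where A': "(quad A2 B2 V0, quad A2 B2 V1, quad A2 B2 V2) = (a,b,c)" by simp
  obtain dd e f where B': "(polar A2 B2 V0 V1, polar A2 B2 V0 V2, polar A2 B2 V1 V2) = (dd,e,f)" by simp
  have qc: "quad A2 B2 (frame_map V w) = quad (a,b,c) (dd,e,f) w" for w
    using quad_frame_map_coef[of A2 B2 V0 V1 V2 w] A' B' V by simp
  have "a = 0 \<and> dd = 0 \<and> b + e = 0 \<and> f = 0 \<and> c = 0"
  proof (rule binary_quartic_vanishing[of T])
    show "finite T" unfolding T_def using fin by blast
    show "card T \<ge> 5" using T(1) cS by simp
    show "\<forall>t\<in>T. t \<noteq> (0,0)" using T(2) by blast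
    show "\<forall>t\<in>T. \<forall>t'\<in>T. t \<noteq> t' \<longrightarrow> det2 t t' \<noteq> 0" using T(3) by blast
    show "\<forall>t\<in>T. a*(fst t)^4 + dd*(fst t)^3*(snd t) + (b+e)*(fst t)^2*(snd t)^2 + f*(fst t)*(snd t)^3 + c*(snd t)^4 = 0"
    proof
      fix t assume "t \<in> T"
      then have "t \<noteq> (0,0)" "frame_point V t \<in> conic_pts A2 B2" using T(2) S2 by blast+
      then have "quad A2 B2 (frame_map V (veronese t)) = 0" unfolding frame_point_def
        using in_conic_iff frame_map_veronese_nonzero[OF d] by blast
      then show "a*(fst t)^4 + dd*(fst t)^3*(snd t) + (b+e)*(fst t)^2*(snd t)^2 + f*(fst t)*(snd t)^3 + c*(snd t)^4 = 0"
        by (simp add: qc quad_veronese_quartic)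
    qed
  qed
  then have z: "a = 0" "dd = 0" "e = -b" "f = 0" "c = 0" by (auto simp: add_eq_0_iff)
  have qq: "quad A2 B2 (frame_map V w) = b * std_form w" for w
    unfolding qc z by (cases w) (simp add: quad_simp std_form_def algebra_simps power2_eq_square)
  have "b \<noteq> 0"
  proof
    assume b0: "b = 0"
    have "\<forall>v. quad A2 B2 v = lin (0,0,0) v * lin (0,0,0) v"
    proof
      fix v
      have "quad A2 B2 v = quad A2 B2 (frame_map V (frame_inv V v))" using d by (simp add: frame_map_inv)
      then show "quad A2 B2 v = lin (0,0,0) v * lin (0,0,0) v" using qq b0 by (cases v) (simp add: lin_def)
    qed
    then show False using irr2 unfolding irreducible_qf_def by blast
  qed
  then show ?thesis using qq d unfolding conic_frame_def by blast
qed

section \<open>Dual 3-nets on a conic\<close>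

lemma dual_3net_props:
  assumes "dual_3net G1 G2 G3 n"
  shows "G1 \<subseteq> proj_points" "finite G1" "card G1 = n"
    "G2 \<subseteq> proj_points" "finite G2" "card G2 = n"
    "G3 \<subseteq> proj_points" "finite G3" "card G3 = n"
    "G1 \<inter> G2 = {}" "G1 \<inter> G3 = {}" "G2 \<inter> G3 = {}"
    "\<And>L. is_line L \<Longrightarrow> L \<inter> G1 \<noteq> {} \<Longrightarrow> L \<inter> G3 \<noteq> {} \<Longrightarrow> L \<inter> G2 \<noteq> {}"
    "\<And>L. is_line L \<Longrightarrow> L \<inter> G2 \<noteq> {} \<Longrightarrow> L \<inter> G3 \<noteq> {} \<Longrightarrow> L \<inter> G1 \<noteq> {}"
    "\<And>L. is_line L \<Longrightarrow> L \<inter> G1 \<noteq> {} \<Longrightarrow> L \<inter> G3 \<noteq> {} \<Longrightarrow> card (L \<inter> G3) = 1"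
    "\<And>L. is_line L \<Longrightarrow> L \<inter> G2 \<noteq> {} \<Longrightarrow> L \<inter> G3 \<noteq> {} \<Longrightarrow> card (L \<inter> G3) = 1"
proof -
  note d = assms[unfolded dual_3net_def Let_def]
  show "G1 \<subseteq> proj_points" "finite G1" "card G1 = n"
    "G2 \<subseteq> proj_points" "finite G2" "card G2 = n"
    "G3 \<subseteq> proj_points" "finite G3" "card G3 = n"
    "G1 \<inter> G2 = {}" "G1 \<inter> G3 = {}" "G2 \<inter> G3 = {}"
    using d by auto
  have ln: "card (L \<inter> G1) = 1 \<and> card (L \<inter> G2) = 1 \<and> card (L \<inter> G3) = 1"
    if L: "is_line L" and meet: "L \<inter> G1 \<noteq> {} \<or> L \<inter> G2 \<noteq> {}" "L \<inter> G3 \<noteq> {}" for L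
  proof -
    define G where "G i = (if i = 1 then G1 else if i = 2 then G2 else G3)" for i :: nat
    have "\<exists>i\<in>{1,2,3}. \<exists>j\<in>{1,2,3}. i \<noteq> j \<and> L \<inter> G i \<noteq> {} \<and> L \<inter> G j \<noteq> {}"
      using meet unfolding G_def by (elim disjE) (intro bexI[of _ 1] bexI[of _ 3] bexI[of _ 2]; simp)+
    then have "\<forall>k\<in>{1,2,3}. card (L \<inter> G k) = 1" using d L unfolding G_def by blast
    then show ?thesis unfolding G_def by auto
  qed
  show "\<And>L. is_line L \<Longrightarrow> L \<inter> G1 \<noteq> {} \<Longrightarrow> L \<inter> G3 \<noteq> {} \<Longrightarrow> L \<inter> G2 \<noteq> {}"
    using ln by (metis card.empty zero_neq_one)
  show "\<And>L. is_line L \<Longrightarrow> L \<inter> G2 \<noteq> {} \<Longrightarrow> L \<inter> G3 \<noteq> {} \<Longrightarrow> L \<inter> G1 \<noteq> {}"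
    using ln by (metis card.empty zero_neq_one)
  show "\<And>L. is_line L \<Longrightarrow> L \<inter> G1 \<noteq> {} \<Longrightarrow> L \<inter> G3 \<noteq> {} \<Longrightarrow> card (L \<inter> G3) = 1"
    using ln by blast
  show "\<And>L. is_line L \<Longrightarrow> L \<inter> G2 \<noteq> {} \<Longrightarrow> L \<inter> G3 \<noteq> {} \<Longrightarrow> card (L \<inter> G3) = 1"
    using ln by blast
qed

lemma net_residual:
  assumes g: "conic_frame A B V k"
    and XY: "X \<subseteq> conic_pts A B" "Y \<subseteq> conic_pts A B"
    and disj: "X \<inter> Y = {}" "X \<inter> Z = {}" "Y \<inter> Z = {}"
    and meet: "\<And>L. is_line L \<Longrightarrow> L \<inter> X \<noteq> {} \<Longrightarrow> L \<inter> Z \<noteq> {} \<Longrightarrow> L \<inter> Y \<noteq> {}"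
    and t: "t \<noteq> (0,0)" "frame_point V t \<in> X" and w: "w \<noteq> (0,0,0)" "pt_of (frame_map V w) \<in> Z"
  shows "std_form w \<noteq> 0 \<and> residual w t \<noteq> (0,0) \<and> frame_point V (residual w t) \<in> Y"
proof -
  have d: "frame_det V \<noteq> 0" using g by (simp add: conic_frame_def)
  define p where "p = frame_map V (veronese t)"
  define q where "q = frame_map V w"
  have pnz: "p \<noteq> (0,0,0)" unfolding p_def using frame_map_veronese_nonzero[OF d t(1)] .
  have qnz: "q \<noteq> (0,0,0)" unfolding q_def using frame_map_nz[OF d w(1)] .
  have pX: "pt_of p \<in> X" using t(2) unfolding p_def frame_point_def .
  have qZ: "pt_of q \<in> Z" using w(2) unfolding q_def .
  have pq: "pt_of p \<noteq> pt_of q" using pX qZ disj(2) by (metis IntI empty_iff)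
  define L where "L = proj_line (cross p q)"
  have L: "is_line L" "pt_of p \<in> L" "pt_of q \<in> L" using line_through[OF pnz qnz pq] unfolding L_def by auto
  have "L \<inter> X \<noteq> {}" "L \<inter> Z \<noteq> {}" using L pX qZ by (metis IntI empty_iff)+
  then have "L \<inter> Y \<noteq> {}" using meet[OF L(1)] by blast
  then obtain P' where P': "P' \<in> L" "P' \<in> Y" by blast
  obtain t' where t': "t' \<noteq> (0,0)" "P' = frame_point V t'" using conic_frame_surj[OF g] P' XY by blast
  have "lin (cross p q) (frame_map V (veronese t')) = 0"
    using P' t' in_line_iff[OF frame_map_veronese_nonzero[OF d t'(1)]] unfolding L_def frame_point_def by blast
  then have "frame_det V * det3 (veronese t) w (veronese t') = 0"
    unfolding lin_cross p_def q_def det3_frame_map by simp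
  then have "det2 t t' * lin (chord t t') w = 0" using d by (simp add: det3_veronese_point)
  moreover have "det2 t t' \<noteq> 0"
  proof
    assume "det2 t t' = 0"
    then have "frame_point V t = frame_point V t'" using frame_point_eq_iff[OF d t(1) t'(1)] by blast
    then show False using t(2) P'(2) t'(2) disj(1) by (metis IntI empty_iff)
  qed
  ultimately have ch: "lin (chord t t') w = 0" by simp
  have q0nz: "std_form w \<noteq> 0"
  proof
    assume "std_form w = 0"
    then obtain \<sigma> c where vscale: "\<sigma> \<noteq> (0,0)" "c \<noteq> 0" "w = vscale c (veronese \<sigma>)" using std_form_zero_imp_veronese w(1) by blast
    have Q: "pt_of (frame_map V w) = frame_point V \<sigma>" unfolding frame_point_def vscale(3) frame_map_vscale using pt_of_vscale vscale(2) by blast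
    have "c * (det2 \<sigma> t * det2 \<sigma> t') = 0" using ch unfolding vscale(3) lin_vscale lin_chord_veronese .
    then have "det2 \<sigma> t = 0 \<or> det2 \<sigma> t' = 0" using vscale(2) by simp
    then show False
    proof
      assume "det2 \<sigma> t = 0"
      then have "frame_point V \<sigma> = frame_point V t" using frame_point_eq_iff[OF d vscale(1) t(1)] by blast
      then show False using Q w(2) t(2) disj(2) by (metis IntI empty_iff)
    next
      assume "det2 \<sigma> t' = 0"
      then have "frame_point V \<sigma> = frame_point V t'" using frame_point_eq_iff[OF d vscale(1) t'(1)] by blast
      then show False using Q w(2) P'(2) t'(2) disj(3) by (metis IntI empty_iff)
    qed
  qed
  have Rnz: "residual w t \<noteq> (0,0)"
  proof
    assume "residual w t = (0,0)"
    then have "vscale2 (std_form w) t = (0,0)" using residual_residual[of w t] residual_zero by metis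
    then show False using q0nz t(1) by (simp add: vscale2_0_iff)
  qed
  have "det2 (residual w t) t' = 0" using ch by (simp add: det2_residual)
  then have "frame_point V (residual w t) = frame_point V t'" using frame_point_eq_iff[OF d Rnz t'(1)] by blast
  then show ?thesis using q0nz Rnz P'(2) t'(2) by simp
qed

lemma line_eq_chord:
  assumes ac: "alg_closed TYPE('k::field)" and u: "u \<noteq> ((0::'k),0,0)"
  shows "\<exists>\<alpha> \<beta>. \<alpha> \<noteq> (0,0) \<and> \<beta> \<noteq> (0,0) \<and> u = chord \<alpha> \<beta>"
proof -
  obtain a b c where U: "u = (a,b,c)" by (cases u) auto
  show ?thesis
  proof (cases "a = 0")
    case True
    then have "(c, -b) \<noteq> (0,0)" using u U by auto
    moreover have "u = chord (1,0) (c,-b)" using True U by (simp add: chord_def)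
    ultimately show ?thesis by (metis prod.inject zero_neq_one)
  next
    case False
    have "degree [:c,b,a:] = 2" using False by simp
    then have "0 < degree [:c,b,a:]" by simp
    then obtain x where x: "poly [:c,b,a:] x = 0" using ac unfolding alg_closed_def by blast
    have "c + (b * x + a * (x * x)) = 0" using x by (simp add: algebra_simps)
    then have "c = - b*x - a*(x*x)" by (simp add: eq_neg_iff_add_eq_0 algebra_simps)
    then have "u = chord (x,1) (-b - x*a, a)" using U by (simp add: chord_def algebra_simps)
    moreover have "(-b - x*a, a) \<noteq> (0,0)" using False by simp
    ultimately show ?thesis by (metis prod.inject zero_neq_one)
  qed
qed

section \<open>Finite sets invariant under dilations or translations\<close>

lemma inj_self_map_eq:
  assumes "finite R" "inj_on f R" "f ` R \<subseteq> R"
  shows "f ` R = R"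
  using assms card_image card_subset_eq by (metis finite_imageI)

lemma dilation_invariant_powers:
  fixes R1 R2 K3 :: "'k::field set"
  assumes fin: "finite R1" "finite K3" and cK: "card K3 = card R1"
    and z: "0 \<notin> R1" "0 \<notin> K3"
    and h12: "\<forall>r\<in>R1. \<forall>\<kappa>\<in>K3. \<kappa> / r \<in> R2"
    and h21: "\<forall>r\<in>R2. \<forall>\<kappa>\<in>K3. \<kappa> / r \<in> R1"
    and r0: "r0 \<in> R1"
  shows "\<forall>r\<in>R1. r ^ card R1 = r0 ^ card R1"
proof -
  have "K3 \<noteq> {}" using cK r0 fin by auto
  then obtain \<kappa>0 where k0: "\<kappa>0 \<in> K3" by blast
  have k0nz: "\<kappa>0 \<noteq> 0" using k0 z by metis
  have unit: "(\<kappa>/\<kappa>0) ^ card R1 = 1" if k: "\<kappa> \<in> K3" for \<kappa>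
  proof -
    define zz where "zz = \<kappa>/\<kappa>0"
    have knz: "\<kappa> \<noteq> 0" using k z by metis
    have zz: "zz \<noteq> 0" unfolding zz_def using knz k0nz by simp
    have img: "(\<lambda>r. zz * r) ` R1 \<subseteq> R1"
    proof
      fix y assume "y \<in> (\<lambda>r. zz * r) ` R1"
      then obtain r where r: "r \<in> R1" "y = zz * r" by blast
      have rnz: "r \<noteq> 0" using r z by metis
      have "\<kappa>0 / r \<in> R2" using h12 r k0 by blast
      then have "\<kappa> / (\<kappa>0 / r) \<in> R1" using h21 k by blast
      moreover have "\<kappa> / (\<kappa>0 / r) = zz * r" unfolding zz_def using rnz k0nz by simp
      ultimately show "y \<in> R1" using r by simp
    qed
    have inj: "inj_on (\<lambda>r. zz * r) R1" using zz by (auto intro: inj_onI)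
    have eq: "(\<lambda>r. zz * r) ` R1 = R1" using inj_self_map_eq[OF fin(1) inj img] .
    have "prod (\<lambda>r. r) R1 = prod (\<lambda>r. r) ((\<lambda>r. zz * r) ` R1)" using eq by simp
    also have "\<dots> = prod (\<lambda>r. zz * r) R1" using prod.reindex[OF inj] by simp
    also have "\<dots> = zz ^ card R1 * prod (\<lambda>r. r) R1" by (simp add: prod.distrib)
    finally have "zz ^ card R1 * prod (\<lambda>r. r) R1 = 1 * prod (\<lambda>r. r) R1" by simp
    moreover have "prod (\<lambda>r. r) R1 \<noteq> 0" using fin(1) z by (simp add: prod_zero_iff)
    ultimately show ?thesis unfolding zz_def by simp
  qed
  have r0nz: "r0 \<noteq> 0" using r0 z by metis
  have img2: "(\<lambda>\<kappa>. (\<kappa>/\<kappa>0) * r0) ` K3 \<subseteq> R1"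
  proof
    fix y assume "y \<in> (\<lambda>\<kappa>. (\<kappa>/\<kappa>0) * r0) ` K3"
    then obtain \<kappa> where k: "\<kappa> \<in> K3" "y = (\<kappa>/\<kappa>0) * r0" by blast
    have "\<kappa>0 / r0 \<in> R2" using h12 r0 k0 by blast
    then have "\<kappa> / (\<kappa>0 / r0) \<in> R1" using h21 k by blast
    moreover have "\<kappa> / (\<kappa>0 / r0) = (\<kappa>/\<kappa>0) * r0" using r0nz k0nz by simp
    ultimately show "y \<in> R1" using k by simp
  qed
  have inj2: "inj_on (\<lambda>\<kappa>. (\<kappa>/\<kappa>0) * r0) K3" using r0nz k0nz by (auto intro: inj_onI)
  have "card ((\<lambda>\<kappa>. (\<kappa>/\<kappa>0) * r0) ` K3) = card R1" using card_image[OF inj2] cK by simp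
  then have eq2: "(\<lambda>\<kappa>. (\<kappa>/\<kappa>0) * r0) ` K3 = R1" using card_subset_eq[OF fin(1) img2] by simp
  show ?thesis
  proof
    fix r assume "r \<in> R1"
    then obtain \<kappa> where k: "\<kappa> \<in> K3" "r = (\<kappa>/\<kappa>0) * r0" using eq2 by blast
    have "r ^ card R1 = (\<kappa>/\<kappa>0) ^ card R1 * r0 ^ card R1" unfolding k(2) by (rule power_mult_distrib)
    then show "r ^ card R1 = r0 ^ card R1" using unit[OF k(1)] by simp
  qed
qed

lemma translation_invariant_trivial:
  fixes R1 R2 E3 :: "'k::field set"
  assumes fin: "finite R1" and cn: "of_nat (card R1) \<noteq> (0::'k)"
    and h12: "\<forall>r\<in>R1. \<forall>e\<in>E3. e - r \<in> R2"
    and h21: "\<forall>r\<in>R2. \<forall>e\<in>E3. e - r \<in> R1"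
    and e: "e0 \<in> E3" "e \<in> E3"
  shows "e = e0"
proof -
  define dd where "dd = e - e0"
  have img: "(\<lambda>r. r + dd) ` R1 \<subseteq> R1"
  proof
    fix y assume "y \<in> (\<lambda>r. r + dd) ` R1"
    then obtain r where r: "r \<in> R1" "y = r + dd" by blast
    have "e0 - r \<in> R2" using h12 r e by blast
    then have "e - (e0 - r) \<in> R1" using h21 e by blast
    moreover have "e - (e0 - r) = y" using r unfolding dd_def by (simp add: algebra_simps)
    ultimately show "y \<in> R1" by simp
  qed
  have inj: "inj_on (\<lambda>r. r + dd) R1" by (auto intro: inj_onI)
  have eq: "(\<lambda>r. r + dd) ` R1 = R1" using inj_self_map_eq[OF fin inj img] .
  have "sum (\<lambda>r. r) R1 = sum (\<lambda>r. r) ((\<lambda>r. r + dd) ` R1)" using eq by simp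
  also have "\<dots> = sum (\<lambda>r. r + dd) R1" using sum.reindex[OF inj] by simp
  also have "\<dots> = sum (\<lambda>r. r) R1 + of_nat (card R1) * dd" by (simp add: sum.distrib)
  finally have "of_nat (card R1) * dd = 0" by simp
  then have "dd = 0" using cn by simp
  then show ?thesis unfolding dd_def by simp
qed

section \<open>Identities on the projective line\<close>

lemma det2_plucker1: "det2 t t' * det2 \<alpha> \<beta> = det2 t \<beta> * det2 \<alpha> t' - det2 \<alpha> t * det2 t' \<beta>"
  by (cases t; cases t'; cases \<alpha>; cases \<beta>) (simp add: det2_def algebra_simps)
lemma det2_plucker2: "det2 t t' * det2 \<gamma> \<alpha> = det2 t \<gamma> * det2 t' \<alpha> - det2 t \<alpha> * det2 t' \<gamma>"
  by (cases t; cases t'; cases \<alpha>; cases \<gamma>) (simp add: det2_def algebra_simps)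
lemma det2_residual_residual: "det2 (residual w a) (residual w b) = - std_form w * det2 a b"
  by (cases w; cases a; cases b) (simp add: det2_def residual_def std_form_def algebra_simps power2_eq_square)

lemma secant_residual_identity: "lin (chord \<alpha> \<beta>) w = 0 \<Longrightarrow>
  det2 (residual w \<beta>) \<beta> * det2 \<alpha> (residual w s) * det2 \<alpha> s = det2 \<alpha> (residual w \<alpha>) * det2 (residual w s) \<beta> * det2 s \<beta>"
proof -
  assume h: "lin (chord \<alpha> \<beta>) w = 0"
  obtain a0 a1 where a: "\<alpha> = (a0,a1)" by (cases \<alpha>) auto
  obtain b0 b1 where b: "\<beta> = (b0,b1)" by (cases \<beta>) auto
  obtain s0 s1 where s: "s = (s0,s1)" by (cases s) auto
  obtain w1 w2 w3 where w: "w = (w1,w2,w3)" by (cases w) auto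
  have e: "a1*b1*w1 - (a0*b1 + a1*b0)*w2 + a0*b0*w3 = 0" using h by (simp add: a b w chord_def lin_def algebra_simps)
  show ?thesis using e unfolding a b s w by (simp add: det2_def residual_def) algebra
qed

lemma tangent_residual_identity: "lin (chord \<alpha> \<alpha>) w = 0 \<Longrightarrow>
  det2 (residual w \<gamma>) \<alpha> * (det2 (residual w s) \<gamma> * det2 s \<alpha> + det2 s \<gamma> * det2 (residual w s) \<alpha>)
   = det2 (residual w \<gamma>) \<gamma> * det2 (residual w s) \<alpha> * det2 s \<alpha>"
proof -
  assume h: "lin (chord \<alpha> \<alpha>) w = 0"
  obtain a0 a1 where a: "\<alpha> = (a0,a1)" by (cases \<alpha>) auto
  obtain b0 b1 where b: "\<gamma> = (b0,b1)" by (cases \<gamma>) auto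
  obtain s0 s1 where s: "s = (s0,s1)" by (cases s) auto
  obtain w1 w2 w3 where w: "w = (w1,w2,w3)" by (cases w) auto
  have e: "a1*a1*w1 - (a0*a1 + a1*a0)*w2 + a0*a0*w3 = 0" using h by (simp add: a w chord_def lin_def algebra_simps)
  show ?thesis using e unfolding a b s w by (simp add: det2_def residual_def) algebra
qed

lemma det2_both_zero: "det2 \<alpha> \<beta> \<noteq> 0 \<Longrightarrow> det2 x \<beta> = 0 \<Longrightarrow> det2 \<alpha> x = 0 \<Longrightarrow> x = (0,0)"
proof -
  assume h: "det2 \<alpha> \<beta> \<noteq> 0" "det2 x \<beta> = 0" "det2 \<alpha> x = 0"
  obtain a0 a1 where a: "\<alpha> = (a0,a1)" by (cases \<alpha>) auto
  obtain b0 b1 where b: "\<beta> = (b0,b1)" by (cases \<beta>) auto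
  obtain x0 x1 where x: "x = (x0,x1)" by (cases x) auto
  have e1: "x0 * b1 = x1 * b0" "a0 * x1 = a1 * x0" using h by (auto simp: a b x det2_def)
  have "(a0*b1 - a1*b0) * x0 = 0" "(a0*b1 - a1*b0) * x1 = 0"
    using e1 by algebra+
  then show ?thesis using h(1) by (simp add: a b x det2_def)
qed

lemma det2_common_factor: "\<alpha> \<noteq> (0,0) \<Longrightarrow> det2 x \<alpha> = 0 \<Longrightarrow> det2 y \<alpha> = 0 \<Longrightarrow> det2 x y = 0"
proof -
  assume h: "\<alpha> \<noteq> (0,0)" "det2 x \<alpha> = 0" "det2 y \<alpha> = 0"
  obtain c where c: "x = vscale2 c \<alpha>" using det2_eq_0_imp_multiple[OF _ h(1)] h(2) det2_swap by (metis neg_equal_0_iff_equal)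
  obtain c' where c': "y = vscale2 c' \<alpha>" using det2_eq_0_imp_multiple[OF _ h(1)] h(3) det2_swap by (metis neg_equal_0_iff_equal)
  show ?thesis by (simp add: c c' det2_vscale2_l det2_vscale2_r det2_self)
qed

lemma residual_nonzero: "std_form w \<noteq> 0 \<Longrightarrow> s \<noteq> (0,0) \<Longrightarrow> residual w s \<noteq> (0,0)"
  using residual_residual[of w s] residual_zero[of w] by (metis vscale2_0_iff)

lemma residual_eq_0: "residual x t = (0,0) \<Longrightarrow> t \<noteq> (0,0) \<Longrightarrow> \<exists>e. x = vscale e (veronese t)"
proof -
  assume h: "residual x t = (0,0)" "t \<noteq> (0,0)"
  obtain s0 s1 where t: "t = (s0,s1)" by (cases t) auto
  obtain x1 x2 x3 where x: "x = (x1,x2,x3)" by (cases x) auto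
  have e: "x2*s0 = x1*s1" "x3*s0 = x2*s1" using h by (auto simp: t x residual_def)
  show ?thesis
  proof (cases "s0 = 0")
    case False
    have e3: "x3*(s0*s0) = x1*(s1*s1)" using e by algebra
    have "x = vscale (x1/s0^2) (veronese t)" using False e(1) e3
      by (simp add: t x vscale_def veronese_def field_simps power2_eq_square)
    then show ?thesis by blast
  next
    case True
    then have "s1 \<noteq> 0" using h t by auto
    then have "x1 = 0" "x2 = 0" using e True by auto
    have "x = vscale (x3/s1^2) (veronese t)" using True \<open>s1 \<noteq> 0\<close> \<open>x1 = 0\<close> \<open>x2 = 0\<close>
      by (simp add: t x vscale_def veronese_def field_simps power2_eq_square)
    then show ?thesis by blast
  qed
qed

lemma residual_determines_point:
  assumes "lin u w = 0" "lin u w' = 0" "lin u (veronese t) \<noteq> 0" "t \<noteq> (0,0)" "w \<noteq> (0,0,0)"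
    "residual w' t \<noteq> (0,0)" "det2 (residual w t) (residual w' t) = 0"
  shows "\<exists>c. c \<noteq> 0 \<and> w = vscale c w'"
proof -
  have "det2 (residual w' t) (residual w t) = 0" using assms(7) det2_swap by (metis neg_equal_0_iff_equal)
  then obtain c where c: "residual w t = vscale2 c (residual w' t)" using det2_eq_0_imp_multiple assms(6) by blast
  define x where "x = vadd w (vscale (-c) w')"
  have "residual x t = (0,0)" using c unfolding x_def
    by (cases w; cases w'; cases t) (simp add: residual_def vadd_def vscale_def vscale2_def algebra_simps)
  then obtain e where e: "x = vscale e (veronese t)" using residual_eq_0 assms(4) by blast
  have "lin u x = lin u w - c * lin u w'" unfolding x_def
    by (cases u; cases w; cases w') (simp add: lin_def vadd_def vscale_def algebra_simps)
  then have "lin u x = 0" using assms(1,2) by simp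
  then have "e = 0" using e assms(3) by (simp add: lin_vscale)
  then have "x = (0,0,0)" using e by (simp add: vscale_0)
  then have "w = vscale c w'" unfolding x_def by (cases w; cases w') (simp add: vadd_def vscale_def algebra_simps)
  moreover then have "c \<noteq> 0" using assms(5) by (auto simp: vscale_0)
  ultimately show ?thesis by blast
qed

definition secant_coord :: "'k::field \<times> 'k \<Rightarrow> 'k \<times> 'k \<Rightarrow> 'k \<times> 'k \<Rightarrow> 'k" where
  "secant_coord \<alpha> \<beta> t = det2 \<alpha> t / det2 t \<beta>"

definition secant_factor :: "'k::field \<times> 'k \<Rightarrow> 'k \<times> 'k \<Rightarrow> 'k vec3 \<Rightarrow> 'k" where
  "secant_factor \<alpha> \<beta> w = det2 \<alpha> (residual w \<alpha>) / det2 (residual w \<beta>) \<beta>"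

lemma secant_coord_vscale2: "c \<noteq> 0 \<Longrightarrow> secant_coord \<alpha> \<beta> (vscale2 c t) = secant_coord \<alpha> \<beta> t"
  unfolding secant_coord_def by (simp add: det2_vscale2_l det2_vscale2_r)

lemma secant_coord_eq_imp_det2:
  assumes D: "det2 \<alpha> \<beta> \<noteq> 0" and "det2 t \<beta> \<noteq> 0" "det2 t' \<beta> \<noteq> 0"
    and "secant_coord \<alpha> \<beta> t = secant_coord \<alpha> \<beta> t'"
  shows "det2 t t' = 0"
proof -
  have eq: "det2 \<alpha> t * det2 t' \<beta> = det2 \<alpha> t' * det2 t \<beta>"
    using assms(2-4) unfolding secant_coord_def by (simp add: frac_eq_eq)
  have "det2 t t' * det2 \<alpha> \<beta> = det2 t \<beta> * det2 \<alpha> t' - det2 \<alpha> t * det2 t' \<beta>" by (rule det2_plucker1)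
  also have "\<dots> = 0" using eq by (simp add: mult.commute)
  finally show ?thesis using D by simp
qed

lemma secant_factor_nonzero:
  assumes D: "det2 \<alpha> \<beta> \<noteq> 0" and w: "lin (chord \<alpha> \<beta>) w = 0" "std_form w \<noteq> 0"
  shows "det2 \<alpha> (residual w \<alpha>) \<noteq> 0" "det2 (residual w \<beta>) \<beta> \<noteq> 0"
proof -
  have nz: "\<alpha> \<noteq> (0,0)" "\<beta> \<noteq> (0,0)" using D by (auto simp: det2_def)
  have "det2 (residual w \<alpha>) \<beta> = 0" using w(1) by (simp add: det2_residual)
  then show "det2 \<alpha> (residual w \<alpha>) \<noteq> 0" using det2_both_zero[OF D] residual_nonzero[OF w(2) nz(1)] by blast
  have "det2 (residual w \<beta>) \<alpha> = 0" using w(1) by (simp add: det2_residual chord_sym)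
  then have "det2 \<alpha> (residual w \<beta>) = 0" using det2_swap by (metis neg_equal_0_iff_equal)
  then show "det2 (residual w \<beta>) \<beta> \<noteq> 0" using det2_both_zero[OF D] residual_nonzero[OF w(2) nz(2)] by blast
qed

lemma secant_coord_residual:
  assumes D: "det2 \<alpha> \<beta> \<noteq> 0" and w: "lin (chord \<alpha> \<beta>) w = 0" "std_form w \<noteq> 0"
    and t: "det2 t \<beta> \<noteq> 0" "det2 \<alpha> t \<noteq> 0" "det2 (residual w t) \<beta> \<noteq> 0"
  shows "secant_coord \<alpha> \<beta> (residual w t) = secant_factor \<alpha> \<beta> w / secant_coord \<alpha> \<beta> t"
  unfolding secant_coord_def secant_factor_def
  using t secant_factor_nonzero[OF D w] secant_residual_identity[OF w(1), of t] by (simp add: field_simps)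

definition tangent_coord :: "'k::field \<times> 'k \<Rightarrow> 'k \<times> 'k \<Rightarrow> 'k \<times> 'k \<Rightarrow> 'k" where
  "tangent_coord \<gamma> \<alpha> t = det2 t \<gamma> / det2 t \<alpha>"

definition tangent_shift :: "'k::field \<times> 'k \<Rightarrow> 'k \<times> 'k \<Rightarrow> 'k vec3 \<Rightarrow> 'k" where
  "tangent_shift \<gamma> \<alpha> w = det2 (residual w \<gamma>) \<gamma> / det2 (residual w \<gamma>) \<alpha>"

lemma tangent_coord_vscale2: "c \<noteq> 0 \<Longrightarrow> tangent_coord \<gamma> \<alpha> (vscale2 c t) = tangent_coord \<gamma> \<alpha> t"
  unfolding tangent_coord_def by (simp add: det2_vscale2_l)

lemma tangent_coord_eq_imp_det2:
  assumes \<gamma>: "det2 \<gamma> \<alpha> \<noteq> 0" and "det2 t \<alpha> \<noteq> 0" "det2 t' \<alpha> \<noteq> 0"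
    and "tangent_coord \<gamma> \<alpha> t = tangent_coord \<gamma> \<alpha> t'"
  shows "det2 t t' = 0"
proof -
  have eq: "det2 t \<gamma> * det2 t' \<alpha> = det2 t' \<gamma> * det2 t \<alpha>"
    using assms(2-4) unfolding tangent_coord_def by (simp add: frac_eq_eq)
  have "det2 t t' * det2 \<gamma> \<alpha> = det2 t \<gamma> * det2 t' \<alpha> - det2 t \<alpha> * det2 t' \<gamma>" by (rule det2_plucker2)
  also have "\<dots> = 0" using eq by (simp add: mult.commute)
  finally show ?thesis using \<gamma> by simp
qed

lemma tangent_coord_residual:
  assumes \<gamma>: "det2 \<gamma> \<alpha> \<noteq> 0" and w: "lin (chord \<alpha> \<alpha>) w = 0" "std_form w \<noteq> 0"
    and t: "det2 t \<alpha> \<noteq> 0" "det2 (residual w t) \<alpha> \<noteq> 0"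
  shows "tangent_coord \<gamma> \<alpha> (residual w t) = tangent_shift \<gamma> \<alpha> w - tangent_coord \<gamma> \<alpha> t"
proof -
  have \<alpha>: "\<alpha> \<noteq> (0,0)" using \<gamma> by (auto simp: det2_def)
  have "det2 (residual w \<gamma>) \<alpha> \<noteq> 0"
  proof
    assume z: "det2 (residual w \<gamma>) \<alpha> = 0"
    have "det2 (residual w \<alpha>) \<alpha> = 0" using w(1) by (simp add: det2_residual)
    then have "det2 (residual w \<alpha>) (residual w \<gamma>) = 0" using det2_common_factor[OF \<alpha> _ z] by blast
    then show False using det2_residual_residual[of w \<alpha> \<gamma>] w(2) \<gamma> det2_swap[of \<alpha> \<gamma>] by simp
  qed
  then show ?thesis unfolding tangent_coord_def tangent_shift_def
    using t tangent_residual_identity[OF w(1), of \<gamma> t] by (simp add: field_simps)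
qed

section \<open>A dual 3-net of conic-line type in standard coordinates\<close>

definition param_values :: "'k::field vec3 \<times> 'k vec3 \<times> 'k vec3 \<Rightarrow> ('k \<times> 'k \<Rightarrow> 'k) \<Rightarrow> 'k ppoint set \<Rightarrow> 'k set" where
  "param_values V f G = (\<lambda>P. f (frame_param V P)) ` G"

definition coord_values :: "'k::field vec3 \<times> 'k vec3 \<times> 'k vec3 \<Rightarrow> ('k vec3 \<Rightarrow> 'k) \<Rightarrow> 'k ppoint set \<Rightarrow> 'k set" where
  "coord_values V K G = (\<lambda>Q. K (frame_coord V Q)) ` G"

locale conic_line_net =
  fixes G1 G2 G3 :: "'k::field ppoint set" and n :: nat and A B u :: "'k vec3"
    and V :: "'k vec3 \<times> 'k vec3 \<times> 'k vec3" and k :: 'k and \<alpha> \<beta> :: "'k \<times> 'k"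
  assumes net: "dual_3net G1 G2 G3 n" and n_ge_2: "n \<ge> 2"
    and conic: "G1 \<union> G2 \<subseteq> conic_pts A B" and line: "G3 \<subseteq> proj_line u" and u_nz: "u \<noteq> (0,0,0)"
    and frame: "conic_frame A B V k"
    and line_chord: "frame_dual V u = chord \<alpha> \<beta>" and \<alpha>_nz: "\<alpha> \<noteq> (0,0)" and \<beta>_nz: "\<beta> \<noteq> (0,0)"
begin

lemmas props = dual_3net_props[OF net]

lemma det_nz: "frame_det V \<noteq> 0"
  using conic_frame_det[OF frame] .

lemma param:
  assumes "P \<in> G1 \<union> G2"
  shows "frame_param V P \<noteq> (0,0)" "frame_point V (frame_param V P) = P"
  using frame_param[OF frame] conic assms by auto

lemma coord:
  assumes "Q \<in> G3"
  shows "frame_coord V Q \<noteq> (0,0,0)" "pt_of (frame_map V (frame_coord V Q)) = Q"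
  using frame_coord[OF det_nz] props(7) assms by auto

lemma coord_inj:
  assumes "Q \<in> G3" "Q' \<in> G3" "frame_coord V Q = vscale c (frame_coord V Q')" "c \<noteq> 0"
  shows "Q = Q'"
  by (metis assms coord(2) frame_map_vscale pt_of_vscale)

lemma residual_12:
  assumes "t \<noteq> (0,0)" "frame_point V t \<in> G1" "w \<noteq> (0,0,0)" "pt_of (frame_map V w) \<in> G3"
  shows "std_form w \<noteq> 0" "residual w t \<noteq> (0,0)" "frame_point V (residual w t) \<in> G2"
  using net_residual[OF frame _ _ props(10-13) assms] conic by auto

lemma residual_21:
  assumes "t \<noteq> (0,0)" "frame_point V t \<in> G2" "w \<noteq> (0,0,0)" "pt_of (frame_map V w) \<in> G3"
  shows "std_form w \<noteq> 0" "residual w t \<noteq> (0,0)" "frame_point V (residual w t) \<in> G1"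
proof -
  have "G2 \<inter> G1 = {}" using props(10) by blast
  then show "std_form w \<noteq> 0" "residual w t \<noteq> (0,0)" "frame_point V (residual w t) \<in> G1"
    using net_residual[OF frame _ _ _ props(12,11,14) assms] conic by auto
qed

text \<open>No point of G1 \<union> G2 lies on the line of G3, since that line already meets G3 in n \<ge> 2 points.\<close>
lemma off_line:
  assumes t: "t \<noteq> (0,0)" "frame_point V t \<in> G1 \<union> G2"
  shows "det2 t \<alpha> \<noteq> 0" "det2 t \<beta> \<noteq> 0"
proof -
  have L: "is_line (proj_line u)" using u_nz unfolding is_line_def by blast
  have I3: "proj_line u \<inter> G3 = G3" using line by blast
  have "G3 \<noteq> {}" using props(9) n_ge_2 by auto
  have "frame_point V t \<notin> proj_line u"
  proof
    assume on: "frame_point V t \<in> proj_line u"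
    have "proj_line u \<inter> G1 \<noteq> {} \<or> proj_line u \<inter> G2 \<noteq> {}" using on t(2) by blast
    then have "card (proj_line u \<inter> G3) = 1" using props(15,16)[OF L] I3 \<open>G3 \<noteq> {}\<close> by metis
    then show False using I3 props(9) n_ge_2 by simp
  qed
  then have "lin u (frame_map V (veronese t)) \<noteq> 0"
    using in_line_iff[OF frame_map_veronese_nonzero[OF det_nz t(1)]] unfolding frame_point_def by blast
  then show "det2 t \<alpha> \<noteq> 0" "det2 t \<beta> \<noteq> 0" by (simp_all add: lin_frame_map line_chord lin_chord_veronese)
qed

lemma G3_on_chord:
  assumes "w \<noteq> (0,0,0)" "pt_of (frame_map V w) \<in> G3"
  shows "lin (chord \<alpha> \<beta>) w = 0"
proof -
  have "pt_of (frame_map V w) \<in> proj_line u" using assms(2) line by blast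
  then have "lin u (frame_map V w) = 0" using in_line_iff[OF frame_map_nz[OF det_nz assms(1)]] by blast
  then show ?thesis by (simp add: lin_frame_map line_chord)
qed

lemma param_values_mem:
  assumes f_scale: "\<And>c t. c \<noteq> 0 \<Longrightarrow> f (vscale2 c t) = f t"
    and G: "G \<subseteq> G1 \<union> G2" and t: "t \<noteq> (0,0)" "frame_point V t \<in> G"
  shows "f t \<in> param_values V f G"
proof -
  define P where "P = frame_point V t"
  have P: "P \<in> G1 \<union> G2" using G t(2) unfolding P_def by blast
  have "det2 (frame_param V P) t = 0"
    using frame_point_eq_iff[OF det_nz param(1)[OF P] t(1)] param(2)[OF P] unfolding P_def by blast
  then obtain c where c: "t = vscale2 c (frame_param V P)" using det2_eq_0_imp_multiple param(1)[OF P] by blast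
  then have "c \<noteq> 0" using t(1) by (auto simp: vscale2_0_iff)
  then have "f t = f (frame_param V P)" using f_scale c by blast
  then show ?thesis using t(2) unfolding param_values_def P_def by blast
qed

lemma G1_param_exists:
  obtains t0 where "t0 \<noteq> (0,0)" "frame_point V t0 \<in> G1"
proof -
  have "G1 \<noteq> {}" using props(3) n_ge_2 by auto
  then obtain P0 where "P0 \<in> G1" by blast
  then have "P0 \<in> G1 \<union> G2" by blast
  then show ?thesis using that[OF param(1)] param(2) \<open>P0 \<in> G1\<close> by simp
qed

lemma card_param_values:
  assumes f_inj: "\<And>t t'. t \<noteq> (0,0) \<Longrightarrow> frame_point V t \<in> G1 \<union> G2 \<Longrightarrow> t' \<noteq> (0,0) \<Longrightarrow>
      frame_point V t' \<in> G1 \<union> G2 \<Longrightarrow> f t = f t' \<Longrightarrow> det2 t t' = 0"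
  shows "card (param_values V f G1) = n"
proof -
  have "inj_on (\<lambda>P. f (frame_param V P)) G1"
  proof (rule inj_onI)
    fix P P' assume P: "P \<in> G1" "P' \<in> G1" "f (frame_param V P) = f (frame_param V P')"
    then have PG: "P \<in> G1 \<union> G2" "P' \<in> G1 \<union> G2" by auto
    have "det2 (frame_param V P) (frame_param V P') = 0"
      using f_inj[OF param(1)[OF PG(1)] _ param(1)[OF PG(2)] _ P(3)] param(2) PG by simp
    then have "frame_point V (frame_param V P) = frame_point V (frame_param V P')"
      using frame_point_eq_iff[OF det_nz param(1)[OF PG(1)] param(1)[OF PG(2)]] by blast
    then show "P = P'" using param(2) PG by simp
  qed
  then show ?thesis unfolding param_values_def using card_image props(3) by metis
qed

text \<open>The residuals of a single point of G1 already separate the points of G3.\<close>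
lemma card_coord_values:
  assumes f_inj: "\<And>t t'. t \<noteq> (0,0) \<Longrightarrow> frame_point V t \<in> G1 \<union> G2 \<Longrightarrow> t' \<noteq> (0,0) \<Longrightarrow>
      frame_point V t' \<in> G1 \<union> G2 \<Longrightarrow> f t = f t' \<Longrightarrow> det2 t t' = 0"
    and f_residual: "\<And>t w. t \<noteq> (0,0) \<Longrightarrow> frame_point V t \<in> G1 \<union> G2 \<Longrightarrow> residual w t \<noteq> (0,0) \<Longrightarrow>
      frame_point V (residual w t) \<in> G1 \<union> G2 \<Longrightarrow> lin (chord \<alpha> \<beta>) w = 0 \<Longrightarrow> std_form w \<noteq> 0 \<Longrightarrow>
      f (residual w t) = h (K w) (f t)"
  shows "card (coord_values V K G3) = n"
proof -
  obtain t0 where t0: "t0 \<noteq> (0,0)" "frame_point V t0 \<in> G1" by (rule G1_param_exists)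
  have "inj_on (\<lambda>Q. K (frame_coord V Q)) G3"
  proof (rule inj_onI)
    fix Q Q' assume Q: "Q \<in> G3" "Q' \<in> G3" "K (frame_coord V Q) = K (frame_coord V Q')"
    define w where "w = frame_coord V Q"
    define w' where "w' = frame_coord V Q'"
    have w: "w \<noteq> (0,0,0)" "pt_of (frame_map V w) \<in> G3" using coord Q(1) unfolding w_def by auto
    have w': "w' \<noteq> (0,0,0)" "pt_of (frame_map V w') \<in> G3" using coord Q(2) unfolding w'_def by auto
    note r = residual_12[OF t0 w] and r' = residual_12[OF t0 w']
    have "f (residual w t0) = f (residual w' t0)"
      using f_residual[OF t0(1) _ r(2) _ G3_on_chord[OF w] r(1)] f_residual[OF t0(1) _ r'(2) _ G3_on_chord[OF w'] r'(1)]
        Q(3) t0(2) r(3) r'(3) unfolding w_def w'_def by simp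
    then have "det2 (residual w t0) (residual w' t0) = 0" using f_inj[OF r(2) _ r'(2)] r(3) r'(3) by blast
    moreover have "lin (chord \<alpha> \<beta>) (veronese t0) \<noteq> 0" using off_line[OF t0(1)] t0(2) by (simp add: lin_chord_veronese)
    ultimately obtain c where "c \<noteq> 0" "w = vscale c w'"
      using residual_determines_point[OF G3_on_chord[OF w] G3_on_chord[OF w'] _ t0(1) w(1) r'(2)] by blast
    then show "Q = Q'" using coord_inj Q(1,2) unfolding w_def w'_def by blast
  qed
  then show ?thesis unfolding coord_values_def using card_image props(9) by metis
qed

lemma param_values_swap:
  assumes f_scale: "\<And>c t. c \<noteq> 0 \<Longrightarrow> f (vscale2 c t) = f t"
    and f_residual: "\<And>t w. t \<noteq> (0,0) \<Longrightarrow> frame_point V t \<in> G1 \<union> G2 \<Longrightarrow> residual w t \<noteq> (0,0) \<Longrightarrow>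
      frame_point V (residual w t) \<in> G1 \<union> G2 \<Longrightarrow> lin (chord \<alpha> \<beta>) w = 0 \<Longrightarrow> std_form w \<noteq> 0 \<Longrightarrow>
      f (residual w t) = h (K w) (f t)"
    and G: "(G = G1 \<and> G' = G2) \<or> (G = G2 \<and> G' = G1)"
    and r: "r \<in> param_values V f G" and \<kappa>: "\<kappa> \<in> coord_values V K G3"
  shows "h \<kappa> r \<in> param_values V f G'"
proof -
  obtain P where P: "P \<in> G" "r = f (frame_param V P)" using r unfolding param_values_def by blast
  obtain Q where Q: "Q \<in> G3" "\<kappa> = K (frame_coord V Q)" using \<kappa> unfolding coord_values_def by blast
  have PG: "P \<in> G1 \<union> G2" using G P(1) by blast
  note t = param[OF PG]
  have w: "frame_coord V Q \<noteq> (0,0,0)" "pt_of (frame_map V (frame_coord V Q)) \<in> G3" using coord Q(1) by auto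
  define t' where "t' = residual (frame_coord V Q) (frame_param V P)"
  have r: "std_form (frame_coord V Q) \<noteq> 0" "t' \<noteq> (0,0)" "frame_point V t' \<in> G'"
    using G residual_12[OF t(1) _ w] residual_21[OF t(1) _ w] t(2) P(1) unfolding t'_def by auto
  have "frame_point V t' \<in> G1 \<union> G2" using r(3) G by blast
  then have "f t' = h \<kappa> r"
    using f_residual[OF t(1) _ r(2)[unfolded t'_def] _ G3_on_chord[OF w] r(1)] t(2) PG
    unfolding P(2) Q(2) t'_def by simp
  then show ?thesis using param_values_mem[OF f_scale _ r(2,3)] G by (metis Un_upper1 Un_upper2)
qed

text \<open>Both cases of the line of G3 (secant or tangent to the conic) are handled by a coordinate f on
  the conic in which the residual map of a point w of G3 becomes r \<mapsto> h (K w) r; the net axioms then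
  say that the n values on G1 and on G2 are swapped by these n maps.\<close>
lemma value_sets:
  fixes f :: "'k \<times> 'k \<Rightarrow> 'k" and K :: "'k vec3 \<Rightarrow> 'k" and h :: "'k \<Rightarrow> 'k \<Rightarrow> 'k"
  assumes f_scale: "\<And>c t. c \<noteq> 0 \<Longrightarrow> f (vscale2 c t) = f t"
    and f_inj: "\<And>t t'. t \<noteq> (0,0) \<Longrightarrow> frame_point V t \<in> G1 \<union> G2 \<Longrightarrow> t' \<noteq> (0,0) \<Longrightarrow>
      frame_point V t' \<in> G1 \<union> G2 \<Longrightarrow> f t = f t' \<Longrightarrow> det2 t t' = 0"
    and f_residual: "\<And>t w. t \<noteq> (0,0) \<Longrightarrow> frame_point V t \<in> G1 \<union> G2 \<Longrightarrow> residual w t \<noteq> (0,0) \<Longrightarrow>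
      frame_point V (residual w t) \<in> G1 \<union> G2 \<Longrightarrow> lin (chord \<alpha> \<beta>) w = 0 \<Longrightarrow> std_form w \<noteq> 0 \<Longrightarrow>
      f (residual w t) = h (K w) (f t)"
  shows "card (param_values V f G1) = n" "card (coord_values V K G3) = n"
    and "\<forall>r\<in>param_values V f G1. \<forall>\<kappa>\<in>coord_values V K G3. h \<kappa> r \<in> param_values V f G2"
    and "\<forall>r\<in>param_values V f G2. \<forall>\<kappa>\<in>coord_values V K G3. h \<kappa> r \<in> param_values V f G1"
proof -
  note swap = param_values_swap[where f = f and K = K and h = h, OF f_scale f_residual]
  show "card (param_values V f G1) = n" by (rule card_param_values[OF f_inj])
  show "card (coord_values V K G3) = n" by (rule card_coord_values[where f = f and K = K and h = h, OF f_inj f_residual])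
  show "\<forall>r\<in>param_values V f G1. \<forall>\<kappa>\<in>coord_values V K G3. h \<kappa> r \<in> param_values V f G2"
    by (intro ballI swap[of G1 G2]) auto
  show "\<forall>r\<in>param_values V f G2. \<forall>\<kappa>\<in>coord_values V K G3. h \<kappa> r \<in> param_values V f G1"
    by (intro ballI swap[of G2 G1]) auto
qed

lemma secant_equation:
  assumes D: "det2 \<alpha> \<beta> \<noteq> 0"
  obtains c where "c \<noteq> 0" "\<And>t. t \<noteq> (0,0) \<Longrightarrow> frame_point V t \<in> G1 \<Longrightarrow> det2 \<alpha> t ^ n = c * det2 t \<beta> ^ n"
proof -
  define \<rho> where "\<rho> = secant_coord \<alpha> \<beta>"
  define K where "K = secant_factor \<alpha> \<beta>"
  have \<rho>_scale: "\<And>c t. c \<noteq> 0 \<Longrightarrow> \<rho> (vscale2 c t) = \<rho> t"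
    unfolding \<rho>_def by (rule secant_coord_vscale2)
  have \<rho>_inj: "\<And>t t'. t \<noteq> (0,0) \<Longrightarrow> frame_point V t \<in> G1 \<union> G2 \<Longrightarrow> t' \<noteq> (0,0) \<Longrightarrow>
      frame_point V t' \<in> G1 \<union> G2 \<Longrightarrow> \<rho> t = \<rho> t' \<Longrightarrow> det2 t t' = 0"
    unfolding \<rho>_def by (rule secant_coord_eq_imp_det2[OF D off_line(2) off_line(2)])
  have \<rho>_residual: "\<And>t w. t \<noteq> (0,0) \<Longrightarrow> frame_point V t \<in> G1 \<union> G2 \<Longrightarrow> residual w t \<noteq> (0,0) \<Longrightarrow>
      frame_point V (residual w t) \<in> G1 \<union> G2 \<Longrightarrow> lin (chord \<alpha> \<beta>) w = 0 \<Longrightarrow> std_form w \<noteq> 0 \<Longrightarrow>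
      \<rho> (residual w t) = K w / \<rho> t"
  proof -
    fix t w assume t: "t \<noteq> (0,0)" "frame_point V t \<in> G1 \<union> G2" "residual w t \<noteq> (0,0)"
      "frame_point V (residual w t) \<in> G1 \<union> G2" and w: "lin (chord \<alpha> \<beta>) w = 0" "std_form w \<noteq> 0"
    have "det2 t \<beta> \<noteq> 0" "det2 \<alpha> t \<noteq> 0" "det2 (residual w t) \<beta> \<noteq> 0"
      using off_line[OF t(1,2)] off_line[OF t(3,4)] det2_swap[of \<alpha> t] by auto
    then show "\<rho> (residual w t) = K w / \<rho> t" unfolding \<rho>_def K_def by (rule secant_coord_residual[OF D w])
  qed
  define R1 where "R1 = param_values V \<rho> G1"
  define R2 where "R2 = param_values V \<rho> G2"
  define K3 where "K3 = coord_values V K G3"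
  have vs: "card R1 = n" "card K3 = n" "\<forall>r\<in>R1. \<forall>\<kappa>\<in>K3. \<kappa> / r \<in> R2" "\<forall>r\<in>R2. \<forall>\<kappa>\<in>K3. \<kappa> / r \<in> R1"
    unfolding R1_def R2_def K3_def
    by (rule value_sets[where f = \<rho> and K = K and h = "\<lambda>\<kappa> r. \<kappa> / r"]; rule \<rho>_scale \<rho>_inj \<rho>_residual; assumption)+
  have R1_mem: "\<rho> t \<in> R1" if "t \<noteq> (0,0)" "frame_point V t \<in> G1" for t
    unfolding R1_def using param_values_mem[OF \<rho>_scale] that by blast
  have \<rho>_nz: "\<rho> t \<noteq> 0" if "t \<noteq> (0,0)" "frame_point V t \<in> G1 \<union> G2" for t
    using off_line[OF that] det2_swap[of \<alpha> t] unfolding \<rho>_def secant_coord_def by auto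
  have "0 \<notin> R1"
  proof
    assume "0 \<in> R1"
    then obtain P where P: "P \<in> G1" "\<rho> (frame_param V P) = 0" unfolding R1_def param_values_def by auto
    then have PG: "P \<in> G1 \<union> G2" by blast
    show False using \<rho>_nz[OF param(1)[OF PG]] param(2)[OF PG] PG P(2) by simp
  qed
  obtain t0 where t0: "t0 \<noteq> (0,0)" "frame_point V t0 \<in> G1" by (rule G1_param_exists)
  have "0 \<notin> K3"
  proof
    assume "0 \<in> K3"
    then obtain Q where Q: "Q \<in> G3" "K (frame_coord V Q) = 0" unfolding K3_def coord_values_def by auto
    have w: "frame_coord V Q \<noteq> (0,0,0)" "pt_of (frame_map V (frame_coord V Q)) \<in> G3" using coord Q(1) by auto
    show False using secant_factor_nonzero[OF D G3_on_chord[OF w] residual_12(1)[OF t0 w]] Q(2)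
      unfolding K_def secant_factor_def by simp
  qed
  have fin: "finite R1" "finite K3"
    unfolding R1_def K3_def param_values_def coord_values_def using props(2,8) by auto
  have "card K3 = card R1" using vs(1,2) by simp
  from dilation_invariant_powers[OF fin this \<open>0 \<notin> R1\<close> \<open>0 \<notin> K3\<close> vs(3,4) R1_mem[OF t0]]
  have pw: "\<forall>r\<in>R1. r ^ n = \<rho> t0 ^ n" unfolding vs(1) .
  show ?thesis
  proof
    show "\<rho> t0 ^ n \<noteq> 0" using R1_mem[OF t0] \<open>0 \<notin> R1\<close> by auto
    fix t assume t: "t \<noteq> (0,0)" "frame_point V t \<in> G1"
    have "\<rho> t ^ n = \<rho> t0 ^ n" using pw R1_mem[OF t] by blast
    moreover have "det2 \<alpha> t = \<rho> t * det2 t \<beta>" using off_line[OF t(1)] t(2) unfolding \<rho>_def secant_coord_def by simp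
    ultimately show "det2 \<alpha> t ^ n = \<rho> t0 ^ n * det2 t \<beta> ^ n" by (simp add: power_mult_distrib)
  qed
qed

text \<open>If the line of G3 were tangent to the conic, the same argument would make the values on G1 invariant
  under n distinct translations; since n is invertible in the field, that is impossible.\<close>
lemma not_tangent:
  assumes n_nz: "of_nat n \<noteq> (0::'k)"
  shows "det2 \<alpha> \<beta> \<noteq> 0"
proof
  assume "det2 \<alpha> \<beta> = 0"
  then obtain e where e: "\<beta> = vscale2 e \<alpha>" using det2_eq_0_imp_multiple \<alpha>_nz by blast
  then have "e \<noteq> 0" using \<beta>_nz by (auto simp: vscale2_0_iff)
  have tangent: "lin (chord \<alpha> \<alpha>) w = 0" if "lin (chord \<alpha> \<beta>) w = 0" for w
    using that \<open>e \<noteq> 0\<close> chord_vscale2[of 1 \<alpha> e \<alpha>] by (simp add: e vscale2_1 lin_vscale_left)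
  have "det2 \<alpha> (1,0) \<noteq> 0 \<or> det2 \<alpha> (0,1) \<noteq> 0" using \<alpha>_nz by (cases \<alpha>) (auto simp: det2_def)
  then obtain \<gamma> where \<gamma>: "det2 \<gamma> \<alpha> \<noteq> 0" using det2_swap by (metis neg_equal_0_iff_equal)
  define \<tau> where "\<tau> = tangent_coord \<gamma> \<alpha>"
  define E where "E = tangent_shift \<gamma> \<alpha>"
  have \<tau>_scale: "\<And>c t. c \<noteq> 0 \<Longrightarrow> \<tau> (vscale2 c t) = \<tau> t"
    unfolding \<tau>_def by (rule tangent_coord_vscale2)
  have \<tau>_inj: "\<And>t t'. t \<noteq> (0,0) \<Longrightarrow> frame_point V t \<in> G1 \<union> G2 \<Longrightarrow> t' \<noteq> (0,0) \<Longrightarrow>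
      frame_point V t' \<in> G1 \<union> G2 \<Longrightarrow> \<tau> t = \<tau> t' \<Longrightarrow> det2 t t' = 0"
    unfolding \<tau>_def by (rule tangent_coord_eq_imp_det2[OF \<gamma> off_line(1) off_line(1)])
  have \<tau>_residual: "\<And>t w. t \<noteq> (0,0) \<Longrightarrow> frame_point V t \<in> G1 \<union> G2 \<Longrightarrow> residual w t \<noteq> (0,0) \<Longrightarrow>
      frame_point V (residual w t) \<in> G1 \<union> G2 \<Longrightarrow> lin (chord \<alpha> \<beta>) w = 0 \<Longrightarrow> std_form w \<noteq> 0 \<Longrightarrow>
      \<tau> (residual w t) = E w - \<tau> t"
    unfolding \<tau>_def E_def by (rule tangent_coord_residual[OF \<gamma> tangent _ off_line(1) off_line(1)])
  define R1 where "R1 = param_values V \<tau> G1"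
  define R2 where "R2 = param_values V \<tau> G2"
  define E3 where "E3 = coord_values V E G3"
  have vs: "card R1 = n" "card E3 = n" "\<forall>r\<in>R1. \<forall>\<kappa>\<in>E3. \<kappa> - r \<in> R2" "\<forall>r\<in>R2. \<forall>\<kappa>\<in>E3. \<kappa> - r \<in> R1"
    unfolding R1_def R2_def E3_def
    by (rule value_sets[where f = \<tau> and K = E and h = "\<lambda>\<kappa> r. \<kappa> - r"]; rule \<tau>_scale \<tau>_inj \<tau>_residual; assumption)+
  have "finite R1" unfolding R1_def param_values_def using props(2) by auto
  have "E3 \<noteq> {}" using vs(2) n_ge_2 by auto
  then obtain e0 where "e0 \<in> E3" by blast
  have "E3 \<subseteq> {e0}"
  proof
    fix e assume "e \<in> E3"
    then show "e \<in> {e0}"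
      using translation_invariant_trivial[OF \<open>finite R1\<close> _ vs(3,4) \<open>e0 \<in> E3\<close>] vs(1) n_nz by simp
  qed
  then have "card E3 \<le> card {e0}" by (intro card_mono) simp_all
  then show False using vs(2) n_ge_2 by simp
qed

end

section \<open>The first component determines the line\<close>

lemma low_coefficients_match:
  fixes a1 b1 a2 b2 c' :: "'k::field"
  assumes E1: "b1 * a1 ^ (m+1) = c' * b2 * a2 ^ (m+1)" and E2: "b1^2 * a1 ^ m = c' * b2^2 * a2 ^ m"
    and \<Delta>: "a1 * b2 - b1 * a2 \<noteq> 0" and c': "c' \<noteq> 0"
  shows "(a1 = 0 \<and> b2 = 0) \<or> (b1 = 0 \<and> a2 = 0)"
proof (cases "a1 = 0")
  case True
  then have "c' * b2 * a2 ^ (m+1) = 0" using E1 by simp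
  then have "b2 = 0 \<or> a2 = 0" using c' by auto
  then show ?thesis using True \<Delta> by auto
next
  case a1: False
  show ?thesis
  proof (cases "b1 = 0")
    case True
    then have "c' * b2 * a2 ^ (m+1) = 0" using E1 by simp
    then have "b2 = 0 \<or> a2 = 0" using c' by auto
    then show ?thesis using True \<Delta> by auto
  next
    case b1: False
    have l: "b1 * a1 ^ (m+1) \<noteq> 0" using a1 b1 by simp
    have "b1^2 * a1 ^ m * (a1 * a2) = c' * b2^2 * a2 ^ m * (a1 * a2)" using E2 by simp
    also have "\<dots> = (c' * b2 * a2 ^ (m+1)) * (b2 * a1)" by (simp add: algebra_simps power2_eq_square)
    also have "\<dots> = (b1 * a1 ^ (m+1)) * (b2 * a1)" using E1 by simp
    finally have "(b1 * a1 ^ (m+1)) * (b1 * a2 - b2 * a1) = 0" by (simp add: algebra_simps power2_eq_square)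
    then have "b1 * a2 - b2 * a1 = 0" using l by simp
    then show ?thesis using \<Delta> by (simp add: algebra_simps)
  qed
qed

lemma det2_plucker4: "det2 \<alpha>' t * det2 \<alpha> \<beta> = det2 t \<beta> * det2 \<alpha>' \<alpha> + det2 \<alpha> t * det2 \<alpha>' \<beta>"
  by (cases t; cases \<alpha>; cases \<beta>; cases \<alpha>') (simp add: det2_def algebra_simps)
lemma det2_plucker5: "det2 t \<beta>' * det2 \<alpha> \<beta> = det2 t \<beta> * det2 \<alpha> \<beta>' + det2 \<alpha> t * det2 \<beta> \<beta>'"
  by (cases t; cases \<alpha>; cases \<beta>; cases \<beta>') (simp add: det2_def algebra_simps)
lemma det2_plucker3: "det2 \<alpha>' \<alpha> * det2 \<beta> \<beta>' - det2 \<alpha>' \<beta> * det2 \<alpha> \<beta>' = - (det2 \<alpha> \<beta> * det2 \<alpha>' \<beta>')"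
  by (cases \<alpha>; cases \<beta>; cases \<alpha>'; cases \<beta>') (simp add: det2_def algebra_simps)

lemma power_relation_coeffs:
  fixes a1 b1 a2 b2 c c' :: "'k::field"
  assumes fin: "finite X" and cX: "card X = n"
    and roots: "\<And>x. x \<in> X \<Longrightarrow> x ^ n = c \<and> (a1 + b1 * x) ^ n = c' * (a2 + b2 * x) ^ n"
    and k: "0 < k" "k < n"
  shows "of_nat (n choose k) * (b1 ^ k * a1 ^ (n - k) - c' * (b2 ^ k * a2 ^ (n - k))) = 0"
proof -
  define g where "g = [:a1, b1:] ^ n - smult c' ([:a2, b2:] ^ n)"
  define f where "f = monom 1 n - [:c:]"
  define hp where "hp = g - smult (coeff g n) f"
  have deg_lin_pow: "degree ([:a, b:] ^ n) \<le> n" for a b :: 'k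
    using degree_power_le[of "[:a, b:]" n] by (simp add: order_trans)
  have "degree g \<le> n" unfolding g_def
    using deg_lin_pow degree_smult_le by (intro degree_diff_le) (blast intro: order_trans)+
  moreover have "degree f \<le> n" unfolding f_def by (rule degree_diff_le) (auto simp: degree_monom_le)
  ultimately have "degree hp \<le> n" unfolding hp_def by (meson degree_diff_le degree_smult_le order_trans)
  moreover have "coeff f n = 1" unfolding f_def using k by (simp add: coeff_monom coeff_pCons split: nat.splits)
  then have "coeff hp n = 0" unfolding hp_def by simp
  have "hp = 0"
  proof (rule ccontr)
    assume hz: "hp \<noteq> 0"
    then have "degree hp < n" using \<open>coeff hp n = 0\<close> \<open>degree hp \<le> n\<close> by (metis leading_coeff_0_iff le_neq_implies_less)
    moreover have "X \<subseteq> {x. poly hp x = 0}"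
      using roots unfolding hp_def g_def f_def by (auto simp: poly_monom algebra_simps)
    then have "card X \<le> degree hp" by (rule roots_bound[OF hz])
    ultimately show False using cX by simp
  qed
  have "coeff f k = 0" unfolding f_def using k by (simp add: coeff_monom coeff_pCons split: nat.splits)
  moreover have "coeff hp k = coeff g k - coeff g n * coeff f k" unfolding hp_def by simp
  ultimately have "coeff g k = 0" using \<open>hp = 0\<close> by simp
  then show ?thesis unfolding g_def using k by (simp add: coeff_linear_poly_power algebra_simps)
qed

text \<open>Both pairs describe the same n points t through [\<alpha>,t]^n = c [t,\<beta>]^n; in the affine coordinate
  x = [\<alpha>,t]/[t,\<beta>] the second equation becomes a binomial relation whose coefficients of x and x^2
  must vanish, which forces {\<alpha>',\<beta>'} = {\<alpha>,\<beta>} up to scalars.\<close>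
lemma same_roots_same_pair:
  fixes S :: "('k::field \<times> 'k) set"
  assumes fin: "finite S" and cS: "card S = n" and n3: "n \<ge> 3"
    and cn: "of_nat n \<noteq> (0::'k)" and c2: "of_nat (n choose 2) \<noteq> (0::'k)"
    and nz: "\<forall>t\<in>S. t \<noteq> (0,0)" and dist: "\<forall>t\<in>S. \<forall>t'\<in>S. t \<noteq> t' \<longrightarrow> det2 t t' \<noteq> 0"
    and D: "det2 \<alpha> \<beta> \<noteq> 0" and h: "\<forall>t\<in>S. det2 \<alpha> t ^ n = c * det2 t \<beta> ^ n"
    and D': "det2 \<alpha>' \<beta>' \<noteq> 0" and c': "c' \<noteq> 0" and h': "\<forall>t\<in>S. det2 \<alpha>' t ^ n = c' * det2 t \<beta>' ^ n"
  shows "(det2 \<alpha> \<alpha>' = 0 \<and> det2 \<beta> \<beta>' = 0) \<or> (det2 \<alpha> \<beta>' = 0 \<and> det2 \<beta> \<alpha>' = 0)"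
proof -
  have Xnz: "det2 t \<beta> \<noteq> 0" if t: "t \<in> S" for t
  proof
    assume z: "det2 t \<beta> = 0"
    then have "det2 \<alpha> t ^ n = 0" using h t n3 by simp
    then have "det2 \<alpha> t = 0" using n3 by simp
    then show False using det2_both_zero[OF D z] nz t by blast
  qed
  define \<rho> where "\<rho> t = det2 \<alpha> t / det2 t \<beta>" for t
  have "inj_on \<rho> S"
  proof (rule inj_onI)
    fix t t' assume tt: "t \<in> S" "t' \<in> S" "\<rho> t = \<rho> t'"
    have eq: "det2 \<alpha> t * det2 t' \<beta> = det2 \<alpha> t' * det2 t \<beta>"
      using tt Xnz unfolding \<rho>_def by (simp add: frac_eq_eq)
    have "det2 t t' * det2 \<alpha> \<beta> = det2 t \<beta> * det2 \<alpha> t' - det2 \<alpha> t * det2 t' \<beta>" by (rule det2_plucker1)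
    also have "\<dots> = 0" using eq by (simp add: mult.commute)
    finally show "t = t'" using D dist tt by auto
  qed
  then have cX: "card (\<rho> ` S) = n" using card_image cS by metis
  define a1 where "a1 = det2 \<alpha>' \<alpha>"
  define b1 where "b1 = det2 \<alpha>' \<beta>"
  define a2 where "a2 = det2 \<alpha> \<beta>'"
  define b2 where "b2 = det2 \<beta> \<beta>'"
  have roots: "x ^ n = c \<and> (a1 + b1 * x) ^ n = c' * (a2 + b2 * x) ^ n" if x: "x \<in> \<rho> ` S" for x
  proof -
    obtain t where t: "t \<in> S" "x = \<rho> t" using x by blast
    have Xt: "det2 t \<beta> \<noteq> 0" using Xnz t(1) .
    have xt: "det2 \<alpha> t = x * det2 t \<beta>" using Xt t(2) unfolding \<rho>_def by simp
    have "det2 \<alpha> t ^ n = c * det2 t \<beta> ^ n" using h t(1) by blast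
    then have "x ^ n * det2 t \<beta> ^ n = c * det2 t \<beta> ^ n" unfolding xt by (simp add: power_mult_distrib)
    then have "x ^ n = c" using Xt by simp
    have e1: "det2 \<alpha>' t * det2 \<alpha> \<beta> = det2 t \<beta> * (a1 + b1 * x)"
      unfolding det2_plucker4[of \<alpha>' t \<alpha> \<beta>] a1_def b1_def xt by (simp add: algebra_simps)
    have e2: "det2 t \<beta>' * det2 \<alpha> \<beta> = det2 t \<beta> * (a2 + b2 * x)"
      unfolding det2_plucker5[of t \<beta>' \<alpha> \<beta>] a2_def b2_def xt by (simp add: algebra_simps)
    have "(det2 \<alpha>' t * det2 \<alpha> \<beta>) ^ n = c' * (det2 t \<beta>' * det2 \<alpha> \<beta>) ^ n"
      using h' t(1) by (simp add: power_mult_distrib)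
    then have "det2 t \<beta> ^ n * (a1 + b1 * x) ^ n = det2 t \<beta> ^ n * (c' * (a2 + b2 * x) ^ n)"
      unfolding e1 e2 by (simp only: power_mult_distrib mult.left_commute)
    then show ?thesis using Xt \<open>x ^ n = c\<close> by simp
  qed
  define m where "m = n - 2"
  have "n - 1 = m + 1" "n - 2 = m" using n3 unfolding m_def by auto
  have "of_nat (n choose 1) * (b1 ^ 1 * a1 ^ (n - 1) - c' * (b2 ^ 1 * a2 ^ (n - 1))) = 0"
    using power_relation_coeffs[of "\<rho> ` S" n c a1 b1 c' a2 b2 1] fin cX roots n3 by simp
  then have E1: "b1 * a1 ^ (m+1) = c' * b2 * a2 ^ (m+1)" using cn \<open>n - 1 = m + 1\<close> by simp
  have "of_nat (n choose 2) * (b1 ^ 2 * a1 ^ (n - 2) - c' * (b2 ^ 2 * a2 ^ (n - 2))) = 0"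
    using power_relation_coeffs[of "\<rho> ` S" n c a1 b1 c' a2 b2 2] fin cX roots n3 by simp
  then have E2: "b1^2 * a1 ^ m = c' * b2^2 * a2 ^ m" using c2 \<open>n - 2 = m\<close> by simp
  have "a1 * b2 - b1 * a2 \<noteq> 0" unfolding a1_def b1_def a2_def b2_def det2_plucker3[of \<alpha>' \<alpha> \<beta> \<beta>'] using D D' by simp
  then have "(a1 = 0 \<and> b2 = 0) \<or> (b1 = 0 \<and> a2 = 0)" using low_coefficients_match[OF E1 E2 _ c'] by blast
  moreover have "det2 \<alpha> \<alpha>' = - a1" "det2 \<beta> \<alpha>' = - b1" unfolding a1_def b1_def by (rule det2_swap)+
  ultimately show ?thesis unfolding a2_def b2_def by auto
qed

lemma chord_eq_if_same_pair:
  assumes "det2 \<alpha> \<beta> \<noteq> 0" "det2 \<alpha>' \<beta>' \<noteq> 0"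
    and "(det2 \<alpha> \<alpha>' = 0 \<and> det2 \<beta> \<beta>' = 0) \<or> (det2 \<alpha> \<beta>' = 0 \<and> det2 \<beta> \<alpha>' = 0)"
  obtains \<mu> where "\<mu> \<noteq> 0" "chord \<alpha>' \<beta>' = vscale \<mu> (chord \<alpha> \<beta>)"
proof -
  have multiple: "\<exists>x. x \<noteq> 0 \<and> b = vscale2 x a" if "det2 a b = 0" "a \<noteq> (0,0)" "b \<noteq> (0,0)" for a b :: "'a \<times> 'a"
    using det2_eq_0_imp_multiple[OF that(1,2)] that(3) by (auto simp: vscale2_0_iff)
  have nz: "\<alpha> \<noteq> (0,0)" "\<beta> \<noteq> (0,0)" "\<alpha>' \<noteq> (0,0)" "\<beta>' \<noteq> (0,0)"
    using assms(1,2) by (auto simp: det2_def)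
  from assms(3) show ?thesis
  proof
    assume "det2 \<alpha> \<alpha>' = 0 \<and> det2 \<beta> \<beta>' = 0"
    then obtain x y where "x \<noteq> 0" "\<alpha>' = vscale2 x \<alpha>" "y \<noteq> 0" "\<beta>' = vscale2 y \<beta>"
      using multiple[of \<alpha> \<alpha>'] multiple[of \<beta> \<beta>'] nz by blast
    then show ?thesis using that[of "x * y"] chord_vscale2[of x \<alpha> y \<beta>] by simp
  next
    assume "det2 \<alpha> \<beta>' = 0 \<and> det2 \<beta> \<alpha>' = 0"
    then obtain x y where "x \<noteq> 0" "\<alpha>' = vscale2 x \<beta>" "y \<noteq> 0" "\<beta>' = vscale2 y \<alpha>"
      using multiple[of \<beta> \<alpha>'] multiple[of \<alpha> \<beta>'] nz det2_swap by (metis neg_equal_0_iff_equal)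
    then show ?thesis using that[of "x * y"] chord_vscale2[of x \<beta> y \<alpha>] chord_sym[of \<beta> \<alpha>] by simp
  qed
qed

lemma frame_dual_inj:
  assumes d: "frame_det V \<noteq> 0" and eq: "frame_dual V u = frame_dual V u'"
  shows "u = u'"
proof -
  have "frame_dual V (vadd u (vscale (-1) u')) = (0,0,0)"
    using eq frame_dual_diff[of V u u'] by (cases "frame_dual V u'") (simp add: vadd_def vscale_def)
  then have "vadd u (vscale (-1) u') = (0,0,0)" by (rule frame_dual_eq_0[OF d])
  then show ?thesis by (cases u; cases u') (simp add: vadd_def vscale_def)
qed

lemma proj_line_vscale: "c \<noteq> 0 \<Longrightarrow> proj_line (vscale c u) = proj_line u"
  unfolding proj_line_def by (simp add: lin_vscale_left)

text \<open>The parameters t of the points of G are the solutions of ([\<alpha>,t]/[t,\<beta>])^n = c, where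
  \<alpha> and \<beta> are the parameters of the two points in which the line u meets the conic.\<close>
definition line_power_equation :: "'k::field vec3 \<times> 'k vec3 \<times> 'k vec3 \<Rightarrow> 'k vec3 \<Rightarrow> nat \<Rightarrow> 'k ppoint set \<Rightarrow> bool" where
  "line_power_equation V u n G \<longleftrightarrow> (\<exists>\<alpha> \<beta> c. det2 \<alpha> \<beta> \<noteq> 0 \<and> c \<noteq> 0 \<and> frame_dual V u = chord \<alpha> \<beta> \<and>
     (\<forall>t. t \<noteq> (0,0) \<longrightarrow> frame_point V t \<in> G \<longrightarrow> det2 \<alpha> t ^ n = c * det2 t \<beta> ^ n))"

lemma net_line_equation:
  fixes G1 G2 G3 :: "'k::field ppoint set"
  assumes net: "dual_3net G1 G2 G3 n" and n2: "n \<ge> 2" and n_nz: "of_nat n \<noteq> (0::'k)"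
    and ac: "alg_closed TYPE('k)" and conic: "G1 \<union> G2 \<subseteq> conic_pts A B"
    and line: "G3 \<subseteq> proj_line u" and u: "u \<noteq> (0,0,0)" and frame: "conic_frame A B V k"
  shows "line_power_equation V u n G1"
proof -
  have "frame_dual V u \<noteq> (0,0,0)" using frame_dual_eq_0[OF conic_frame_det[OF frame]] u by blast
  then obtain \<alpha> \<beta> where ab: "\<alpha> \<noteq> (0,0)" "\<beta> \<noteq> (0,0)" "frame_dual V u = chord \<alpha> \<beta>"
    using line_eq_chord[OF ac] by blast
  interpret conic_line_net G1 G2 G3 n A B u V k \<alpha> \<beta>
    using assms ab by unfold_locales
  obtain c where "c \<noteq> 0" "\<And>t. t \<noteq> (0,0) \<Longrightarrow> frame_point V t \<in> G1 \<Longrightarrow> det2 \<alpha> t ^ n = c * det2 t \<beta> ^ n"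
    using secant_equation[OF not_tangent[OF n_nz]] by blast
  then show ?thesis unfolding line_power_equation_def using ab(3) not_tangent[OF n_nz] by blast
qed

lemma line_power_equation_unique:
  fixes V :: "'k::field vec3 \<times> 'k vec3 \<times> 'k vec3"
  assumes frame: "conic_frame A B V k" and G: "G \<subseteq> conic_pts A B" "finite G" "card G = n" "n \<ge> 3"
    and n_nz: "of_nat n \<noteq> (0::'k)" and choose_nz: "of_nat (n choose 2) \<noteq> (0::'k)"
    and eq: "line_power_equation V u n G" and eq': "line_power_equation V u' n G"
  shows "proj_line u' = proj_line u"
proof -
  obtain \<alpha> \<beta> c where ab: "det2 \<alpha> \<beta> \<noteq> 0" "frame_dual V u = chord \<alpha> \<beta>"
      "\<forall>t. t \<noteq> (0,0) \<longrightarrow> frame_point V t \<in> G \<longrightarrow> det2 \<alpha> t ^ n = c * det2 t \<beta> ^ n"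
    using eq unfolding line_power_equation_def by blast
  obtain \<alpha>' \<beta>' c' where ab': "det2 \<alpha>' \<beta>' \<noteq> 0" "c' \<noteq> 0" "frame_dual V u' = chord \<alpha>' \<beta>'"
      "\<forall>t. t \<noteq> (0,0) \<longrightarrow> frame_point V t \<in> G \<longrightarrow> det2 \<alpha>' t ^ n = c' * det2 t \<beta>' ^ n"
    using eq' unfolding line_power_equation_def by blast
  define S where "S = frame_param V ` G"
  note S = frame_param_image[OF frame G(1), folded S_def]
  have "(det2 \<alpha> \<alpha>' = 0 \<and> det2 \<beta> \<beta>' = 0) \<or> (det2 \<alpha> \<beta>' = 0 \<and> det2 \<beta> \<alpha>' = 0)"
  proof (rule same_roots_same_pair[OF _ _ G(4) n_nz choose_nz _ _ ab(1) _ ab'(1,2)])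
    show "finite S" unfolding S_def using G(2) by simp
    show "card S = n" using S(1) G(3) by simp
    show "\<forall>t\<in>S. t \<noteq> (0,0)" "\<forall>t\<in>S. \<forall>t'\<in>S. t \<noteq> t' \<longrightarrow> det2 t t' \<noteq> 0" using S(2,3) by blast+
    show "\<forall>t\<in>S. det2 \<alpha> t ^ n = c * det2 t \<beta> ^ n" "\<forall>t\<in>S. det2 \<alpha>' t ^ n = c' * det2 t \<beta>' ^ n"
      using S(2) ab(3) ab'(4) by blast+
  qed
  then obtain \<mu> where "\<mu> \<noteq> 0" "chord \<alpha>' \<beta>' = vscale \<mu> (chord \<alpha> \<beta>)"
    using chord_eq_if_same_pair[OF ab(1) ab'(1)] by blast
  then have "u' = vscale \<mu> u"
    using frame_dual_inj[OF conic_frame_det[OF frame]] ab(2) ab'(3) by (simp add: frame_dual_vscale)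
  then show ?thesis using proj_line_vscale[OF \<open>\<mu> \<noteq> 0\<close>] by simp
qed

lemma of_nat_nonzero_below_char:
  assumes "CHAR('k::field) > 0 \<longrightarrow> n < CHAR('k)" "0 < m" "m \<le> n"
  shows "of_nat m \<noteq> (0::'k)"
proof
  assume "of_nat m = (0::'k)"
  then have "CHAR('k) dvd m" by (simp add: of_nat_eq_0_iff_char_dvd)
  then show False using assms by (cases "CHAR('k) = 0") (auto dest: dvd_imp_le)
qed

lemma of_nat_choose_two_nonzero:
  assumes "CHAR('k::field) > 0 \<longrightarrow> n < CHAR('k)" "n \<ge> 2"
  shows "of_nat (n choose 2) \<noteq> (0::'k)"
proof
  assume "of_nat (n choose 2) = (0::'k)"
  then have "of_nat (2 * (n choose 2)) = (0::'k)" by simp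
  moreover have "2 * (n choose 2) = n * (n - 1)" by (metis Suc_1 binomial_absorption choose_one)
  ultimately have "of_nat n * of_nat (n - 1) = (0::'k)" by simp
  moreover have "of_nat n \<noteq> (0::'k)" "of_nat (n - 1) \<noteq> (0::'k)"
    using of_nat_nonzero_below_char[OF assms(1), of n] of_nat_nonzero_below_char[OF assms(1), of "n - 1"] assms(2)
    by auto
  ultimately show False by simp
qed

lemma obtain_three_distinct:
  assumes "finite G" "card G \<ge> 3"
  obtains P0 P1 P2 where "P0 \<in> G" "P1 \<in> G" "P2 \<in> G" "P0 \<noteq> P1" "P0 \<noteq> P2" "P1 \<noteq> P2"
proof -
  have "G \<noteq> {}" using assms card_gt_0_iff[of G] by simp
  then obtain P0 where P0: "P0 \<in> G" by blast
  have c1: "card (G - {P0}) \<ge> 2" using assms P0 by simp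
  then have "G - {P0} \<noteq> {}" using card_gt_0_iff[of "G - {P0}"] by simp
  then obtain P1 where P1: "P1 \<in> G - {P0}" by blast
  have "card (G - {P0} - {P1}) \<ge> 1" using assms P0 P1 c1 by simp
  then have "G - {P0} - {P1} \<noteq> {}" using card_gt_0_iff[of "G - {P0} - {P1}"] by simp
  then obtain P2 where P2: "P2 \<in> G - {P0} - {P1}" by blast
  show ?thesis using that P0 P1 P2 by blast
qed

lemma conic_frame_through:
  assumes irr: "irreducible_qf A B" and G: "G \<subseteq> conic_pts A B" "finite G" "card G \<ge> 3"
  obtains V k where "conic_frame A B V k"
proof -
  obtain P0 P1 P2 where P: "P0 \<in> G" "P1 \<in> G" "P2 \<in> G" "P0 \<noteq> P1" "P0 \<noteq> P2" "P1 \<noteq> P2"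
    using obtain_three_distinct[OF G(2,3)] .
  obtain p0 where p0: "p0 \<noteq> (0,0,0)" "P0 = pt_of p0" "quad A B p0 = 0" using G(1) P(1) by (blast elim: conic_ptsE)
  obtain p1 where p1: "p1 \<noteq> (0,0,0)" "P1 = pt_of p1" "quad A B p1 = 0" using G(1) P(2) by (blast elim: conic_ptsE)
  obtain p2 where p2: "p2 \<noteq> (0,0,0)" "P2 = pt_of p2" "quad A B p2 = 0" using G(1) P(3) by (blast elim: conic_ptsE)
  show ?thesis
    using conic_frame_exists[OF irr p0(1) p1(1) p2(1) p0(3) p1(3) p2(3)] P(4-6) p0(2) p1(2) p2(2) that by blast
qed

theorem proposition4p12:
  fixes G1 G2 G3 D1 D2 D3 C E l s :: "'k::field ppoint set" and n :: nat
  assumes "alg_closed TYPE('k)"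
    and "CHAR('k) = 0 \<or> CHAR('k) \<ge> 5"
    and "CHAR('k) > 0 \<longrightarrow> n < CHAR('k)"
    and "conic_line_type G1 G2 G3 n C l"
    and "conic_line_type D1 D2 D3 n E s"
    and "n \<ge> 5"
    and "G1 = D1"
  shows "l = s"
proof -
  obtain A B u where net1: "dual_3net G1 G2 G3 n" and irr: "irreducible_qf A B"
    and C: "G1 \<union> G2 \<subseteq> conic_pts A B" and u: "u \<noteq> (0,0,0)" "l = proj_line u" "G3 \<subseteq> proj_line u"
    using assms(4) unfolding conic_line_type_def is_irred_conic_def is_line_def by blast
  obtain A' B' u' where net2: "dual_3net G1 D2 D3 n" and irr': "irreducible_qf A' B'"
    and E: "G1 \<union> D2 \<subseteq> conic_pts A' B'" and u': "u' \<noteq> (0,0,0)" "s = proj_line u'" "D3 \<subseteq> proj_line u'"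
    using assms(5,7) unfolding conic_line_type_def is_irred_conic_def is_line_def by blast
  have G1: "G1 \<subseteq> conic_pts A B" "finite G1" "card G1 = n" "n \<ge> 3"
    using C dual_3net_props(2,3)[OF net1] assms(6) by auto
  have n_nz: "of_nat n \<noteq> (0::'k)" using of_nat_nonzero_below_char[OF assms(3)] assms(6) by simp
  obtain V k where frame: "conic_frame A B V k" using conic_frame_through[OF irr G1(1,2)] G1(3,4) by blast
  have "G1 \<subseteq> conic_pts A' B'" "card G1 \<ge> 5" using E G1(3) assms(6) by auto
  then obtain k' where frame': "conic_frame A' B' V k'"
    using conic_frame_transfer[OF frame irr' G1(1) _ G1(2)] by blast
  have n2: "n \<ge> 2" using assms(6) by simp
  have "line_power_equation V u n G1" "line_power_equation V u' n G1"
    using net_line_equation[OF net1 n2 n_nz assms(1) C u(3) u(1) frame]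
      net_line_equation[OF net2 n2 n_nz assms(1) E u'(3) u'(1) frame'] .
  then have "proj_line u' = proj_line u"
    using line_power_equation_unique[OF frame G1 n_nz of_nat_choose_two_nonzero[OF assms(3) n2]] by blast
  then show "l = s" using u(2) u'(2) by simp
qed

end
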